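(* Let $n\ge1$, $1\le p\le q<\infty$ and $\alpha\in\mathbb{R}$, with $\alpha\le0$ if $p=q$. Then $SR_{p,q}\log^\alpha(\mathbb{R}^n)=M_{n(\frac1p-\frac1q),\alpha}L^q(\mathbb{R}^n)$.
   Context: $\mathcal{D}(\mathbb{R}^n)=\{2^{-k}(m+[0,1)^n):k\in\mathbb{Z},m\in\mathbb{Z}^n\}$. A countable $(Q_i)_{i\in I}\subset\mathcal{D}(\mathbb{R}^n)$ is sparse if there exist pairwise disjoint measurable $E_{Q_i}\subseteq Q_i$ with $|E_{Q_i}|\ge\frac12|Q_i|$; $S(\mathbb{R}^n)$ is the set of sparse families. $(a)_-=\min\{a,0\}$, natural logarithm, $p'$ dual exponent. $SR_{p,q}\log^\alpha(\mathbb{R}^n)$ is the set of $f\in L^1_{\mathrm{loc}}(\mathbb{R}^n)$ with $\sup_{(Q_i)\in S(\mathbb{R}^n)}\big\{\sum_i\big[(1-(\log|Q_i|)_-)^\alpha|Q_i|^{-1/p'}\int_{Q_i}|f|\big]^q\big\}^{1/q}<\infty$. For $0\le\lambda<n$, $M_{\lambda,\alpha}f(x)=\sup_{Q\in\mathcal{D}(\mathbb{R}^n),\,x\in Q}|Q|^{\frac\lambda n-1}(1-(\log|Q|)_-)^\alpha\int_Q|f|$, and $M_{\lambda,\alpha}L^q(\mathbb{R}^n)=\{f\in L^1_{\mathrm{loc}}(\mathbb{R}^n):\|M_{\lambda,\alpha}f\|_{L^q(\mathbb{R}^n)}<\infty\}$. *)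

theory Defs
  imports "HOL-Analysis.Analysis"
begin

definition dyadic_cube :: "int \<Rightarrow> ('n::finite \<Rightarrow> int) \<Rightarrow> (real^'n) set" where
  "dyadic_cube k m = {x. \<forall>i. 2 powr (- real_of_int k) * real_of_int (m i) \<le> x $ i \<and>
                              x $ i < 2 powr (- real_of_int k) * (real_of_int (m i) + 1)}"

definition dyadic_cubes :: "(real^'n::finite) set set" where
  "dyadic_cubes = {dyadic_cube k m | k m. True}"

text \<open>A countable family (Q i) indexed by I (countable index sets reindexed into nat) is sparse.\<close>
definition sparse :: "nat set \<Rightarrow> (nat \<Rightarrow> (real^'n::finite) set) \<Rightarrow> bool" where
  "sparse I Q \<longleftrightarrow> (\<forall>i\<in>I. Q i \<in> dyadic_cubes) \<and>
     (\<exists>E. disjoint_family_on E I \<and>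
          (\<forall>i\<in>I. E i \<in> sets lebesgue \<and> E i \<subseteq> Q i \<and> measure lebesgue (E i) \<ge> measure lebesgue (Q i) / 2))"

definition loc_integrable :: "(real^'n::finite \<Rightarrow> real) \<Rightarrow> bool" where
  "loc_integrable f \<longleftrightarrow> (\<forall>K. compact K \<longrightarrow> set_integrable lebesgue K f)"

definition logw :: "real \<Rightarrow> (real^'n::finite) set \<Rightarrow> real" where
  "logw \<alpha> Q = (1 - min (ln (measure lebesgue Q)) 0) powr \<alpha>"

text \<open>|Q|^(-1/p') = |Q|^(1/p - 1), with p' the dual exponent of p (p' = \<infinity> for p = 1).\<close>
definition SR_term :: "real \<Rightarrow> real \<Rightarrow> real \<Rightarrow> (real^'n::finite \<Rightarrow> real) \<Rightarrow> (real^'n) set \<Rightarrow> real" where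
  "SR_term p q \<alpha> f Q = (logw \<alpha> Q * measure lebesgue Q powr (1/p - 1) *
                         (LINT x:Q|lebesgue. \<bar>f x\<bar>)) powr q"

definition SR_log :: "real \<Rightarrow> real \<Rightarrow> real \<Rightarrow> (real^'n::finite \<Rightarrow> real) set" where
  "SR_log p q \<alpha> = {f. loc_integrable f \<and>
      (SUP (I, Q) \<in> {(I, Q). sparse I Q}.
          (\<Sum>i. if i \<in> I then ennreal (SR_term p q \<alpha> f (Q i)) else 0)) < \<infinity>}"

definition max_op :: "real \<Rightarrow> real \<Rightarrow> (real^'n::finite \<Rightarrow> real) \<Rightarrow> real^'n \<Rightarrow> ennreal" where
  "max_op lam \<alpha> f x = (SUP Q \<in> {Q \<in> dyadic_cubes. x \<in> Q}.
      ennreal (measure lebesgue Q powr (lam / real CARD('n) - 1) * logw \<alpha> Q *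
               (LINT y:Q|lebesgue. \<bar>f y\<bar>)))"

definition enn_powr :: "ennreal \<Rightarrow> real \<Rightarrow> ennreal" where
  "enn_powr t q = (if t = \<infinity> then \<infinity> else ennreal (enn2real t powr q))"

definition max_Lq :: "real \<Rightarrow> real \<Rightarrow> real \<Rightarrow> (real^'n::finite \<Rightarrow> real) set" where
  "max_Lq lam \<alpha> q = {f. loc_integrable f \<and>
      (\<integral>\<^sup>+ x. enn_powr (max_op lam \<alpha> f x) q \<partial>lebesgue) < \<infinity>}"

end

theory Submission
  imports Defs
begin

(*
  For a dyadic cube Q let A(Q) = |Q|^(a - 1) (1 - (log |Q|)_-)^alpha int_Q |f| with a = 1/p - 1/q
  (weighted_average a alpha f Q below). Then M f (x) is the supremum of A(Q) over the cubes
  containing x, and the sums defining SR are sums of |Q_i| A(Q_i)^q.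

  If M f is in L^q and (Q_i) is sparse with disjoint E_i in Q_i, |E_i| >= |Q_i|/2, then
  sum |Q_i| A(Q_i)^q <= 2 sum |E_i| A(Q_i)^q <= 2 int (M f)^q, since M f >= A(Q_i) on E_i.

  Conversely, let all sparse sums be bounded by B. The ancestors of a cube form a sparse chain,
  so only finitely many of them have A > t; hence every cube with A > t lies in a maximal such
  cube, a stopping cube of level t, and {M f > t} is the disjoint union of these. A stopping cube
  of level t has A <= C t (compare with its parent), and quasi-monotonicity of
  s^a (1 - (log s)_-)^alpha in s, which needs a > 0 or alpha <= 0, shows that stopping cubes of
  level t' > t cover at most the fraction C t / t' of it. For levels 2^k in a fixed residue class
  modulo a large M, the stopping cubes minus the stopping cubes of level 2^(k+M) therefore form a
  sparse family, and int (M f)^q <= 2^q sum_k 2^(kq) |{M f > 2^k}| <= 2^q M B.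
*)

lemma exists_two_powr_between:
  assumes "0 < y"
  obtains k :: int where "2 powr real_of_int k < y" "y \<le> 2 * 2 powr real_of_int k"
proof
  define k where "k = \<lceil>log 2 y\<rceil> - 1"
  have "2 powr real_of_int k < 2 powr log 2 y"
    unfolding k_def by (intro powr_less_mono) linarith+
  then show "2 powr real_of_int k < y"
    using assms by simp
  have "y = 2 powr log 2 y"
    using assms by simp
  also have "\<dots> \<le> 2 powr real_of_int (k + 1)"
    unfolding k_def by (intro powr_mono) auto
  finally show "y \<le> 2 * 2 powr real_of_int k"
    by (simp add: powr_add)
qed

lemma exists_power_two_halving:
  fixes C :: real
  obtains M :: nat where "0 < M" "C / 2 ^ M \<le> 1 / 2"
proof -
  obtain m :: nat where "2 * C < 2 ^ m"
    using real_arch_pow[of 2 "2 * C"] by auto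
  then have "C \<le> 2 ^ m"
    using zero_less_power[of "2::real" m] by linarith
  then show ?thesis
    by (intro that[of "Suc m"]) (auto simp: field_simps)
qed

lemma ennreal_powr_le_enn_powr:
  assumes "ennreal v \<le> M" "0 \<le> v" "0 \<le> q"
  shows "ennreal (v powr q) \<le> enn_powr M q"
proof (cases "M = \<infinity>")
  case False
  then have "v \<le> enn2real M"
    using assms by (cases M) auto
  then show ?thesis
    using False assms by (auto simp: enn_powr_def intro: powr_mono2)
qed (simp add: enn_powr_def)

lemma set_integral_abs_nonneg: "0 \<le> (LINT y:Q|M. \<bar>f y :: real\<bar>)"
  unfolding set_lebesgue_integral_def by (rule integral_nonneg_AE) (auto simp: indicator_def)

lemma nn_set_integral_abs:
  assumes "set_integrable M A f" "A \<in> sets M"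
  shows "(\<integral>\<^sup>+x\<in>A. ennreal \<bar>f x\<bar> \<partial>M) = ennreal (LINT x:A|M. \<bar>f x\<bar>)"
proof -
  have "integrable M (\<lambda>x. indicator A x *\<^sub>R \<bar>f x\<bar>)"
    using set_integrable_abs[OF assms(1)] unfolding set_integrable_def .
  then have "(\<integral>\<^sup>+x. ennreal (indicator A x *\<^sub>R \<bar>f x\<bar>) \<partial>M) = ennreal (LINT x:A|M. \<bar>f x\<bar>)"
    unfolding set_lebesgue_integral_def by (rule nn_integral_eq_integral) (auto simp: indicator_def)
  moreover have "ennreal (indicator A x *\<^sub>R \<bar>f x\<bar>) = ennreal \<bar>f x\<bar> * indicator A x" for x
    by (auto simp: indicator_def)
  ultimately show ?thesis
    by simp
qed

lemma ennreal_eq_infinity_if_unbounded: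
  fixes g :: ennreal
  assumes "\<And>s. 0 < s \<Longrightarrow> ennreal s \<le> g"
  shows "g = \<infinity>"
proof (rule ccontr)
  assume "g \<noteq> \<infinity>"
  then obtain r where "g = ennreal r" "0 \<le> r"
    by (cases g) auto
  then show False
    using assms[of "r + 1"] by simp
qed

lemma SUP_less_infinity_iff:
  fixes g :: "'a \<Rightarrow> ennreal"
  shows "(SUP x\<in>A. g x) < \<infinity> \<longleftrightarrow> (\<exists>B<\<infinity>. \<forall>x\<in>A. g x \<le> B)"
proof
  assume "(SUP x\<in>A. g x) < \<infinity>"
  then show "\<exists>B<\<infinity>. \<forall>x\<in>A. g x \<le> B"
    by (blast intro: SUP_upper)
next
  assume "\<exists>B<\<infinity>. \<forall>x\<in>A. g x \<le> B"
  then obtain B where B: "B < \<infinity>" "\<And>x. x \<in> A \<Longrightarrow> g x \<le> B"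
    by blast
  then have "(SUP x\<in>A. g x) \<le> B"
    by (intro SUP_least)
  then show "(SUP x\<in>A. g x) < \<infinity>"
    using B(1) by (rule order.strict_trans1)
qed

lemma finite_if_suminf_less_infinity:
  fixes u :: "nat \<Rightarrow> ennreal"
  assumes "(\<Sum>j. u j) < \<infinity>" "0 < c" "\<And>j. j \<in> J \<Longrightarrow> ennreal c \<le> u j"
  shows "finite J"
proof (rule ccontr)
  assume "infinite J"
  obtain b where b: "(\<Sum>j. u j) = ennreal b" "0 \<le> b"
    using assms(1) by (cases "\<Sum>j. u j") auto
  obtain J' where J': "finite J'" "card J' = nat \<lceil>b / c\<rceil> + 1" "J' \<subseteq> J"
    using infinite_arbitrarily_large[OF \<open>infinite J\<close>] by blast
  have "ennreal (real (card J') * c) = (\<Sum>j\<in>J'. ennreal c)"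
    using assms(2) by (simp add: ennreal_mult ennreal_of_nat_eq_real_of_nat)
  also have "\<dots> \<le> (\<Sum>j\<in>J'. u j)"
    using J'(3) assms(3) by (intro sum_mono) auto
  also have "\<dots> \<le> (\<Sum>j. u j)"
    using J'(1) by (intro sum_le_suminf summableI) auto
  finally have "real (card J') * c \<le> b"
    using b by simp
  moreover have "b / c < real (card J')"
    using J'(2) real_nat_ceiling_ge[of "b / c"] by simp
  then have "b < real (card J') * c"
    using assms(2) by (simp add: divide_less_eq)
  ultimately show False
    by simp
qed

lemma measure_mult_le_nn_integral_indicator:
  assumes "E \<in> fmeasurable M" "measure M Q / 2 \<le> measure M E" "0 \<le> c"
  shows "ennreal (measure M Q * c) \<le> 2 * (\<integral>\<^sup>+x. ennreal c * indicator E x \<partial>M)"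
proof -
  have integral: "(\<integral>\<^sup>+x. ennreal c * indicator E x \<partial>M) = ennreal (c * measure M E)"
    using assms(1,3) by (simp add: nn_integral_cmult_indicator fmeasurableD emeasure_eq_measure2 ennreal_mult)
  have "measure M Q * c \<le> 2 * (c * measure M E)"
    using mult_right_mono[OF assms(2,3)] by (simp add: algebra_simps)
  then have "ennreal (measure M Q * c) \<le> ennreal (2 * (c * measure M E))"
    by (rule ennreal_leI)
  also have "\<dots> = 2 * (\<integral>\<^sup>+x. ennreal c * indicator E x \<partial>M)"
    unfolding integral by (rule numeral_mult_ennreal[symmetric]) (simp add: assms(3))
  finally show ?thesis .
qed

lemma suminf_disjoint_indicator_le:
  fixes c :: "nat \<Rightarrow> ennreal"
  assumes "disjoint_family_on E I" "\<And>i. i \<in> I \<Longrightarrow> x \<in> E i \<Longrightarrow> c i \<le> G"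
  shows "(\<Sum>i. if i \<in> I then c i * indicator (E i) x else 0) \<le> G"
proof (cases "\<exists>i\<in>I. x \<in> E i")
  case True
  then obtain i where i: "i \<in> I" "x \<in> E i"
    by blast
  have "x \<notin> E j" if "j \<in> I" "j \<noteq> i" for j
    using assms(1) i that unfolding disjoint_family_on_def by blast
  then have "(\<Sum>j. if j \<in> I then c j * indicator (E j) x else 0) = c i"
    using suminf_finite[of "{i}" "\<lambda>j. if j \<in> I then c j * indicator (E j) x else 0"] i by simp
  then show ?thesis
    using assms(2) i by simp
next
  case False
  then have "(if j \<in> I then c j * indicator (E j) x else 0) = 0" for j
    by auto
  then show ?thesis
    by simp
qed

lemma measure_Diff_ge_half:
  assumes "Q \<in> fmeasurable M" "A \<in> sets M" "measure M (Q \<inter> A) \<le> measure M Q / 2"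
  shows "measure M Q / 2 \<le> measure M (Q - A)"
proof -
  have "measure M Q - measure M (Q \<inter> A) \<le> measure M (Q - (Q \<inter> A))"
    using assms(1,2) by (intro measure_diff_le_measure_setdiff fmeasurableI2[OF assms(1)]) auto
  moreover have "Q - (Q \<inter> A) = Q - A"
    by blast
  ultimately show ?thesis
    using assms(3) by simp
qed

lemma emeasure_Union_le_nn_set_integral:
  fixes g :: "'a \<Rightarrow> ennreal"
  assumes "countable RR" "disjoint RR" "RR \<subseteq> sets M" "g \<in> borel_measurable M"
    and "\<And>R. R \<in> RR \<Longrightarrow> emeasure M R \<le> (\<integral>\<^sup>+x\<in>R. g x \<partial>M)"
  shows "emeasure M (\<Union>RR) \<le> (\<integral>\<^sup>+x\<in>\<Union>RR. g x \<partial>M)"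
proof -
  have disj: "disjoint_family_on (\<lambda>R. R) RR"
    using assms(2) by (simp add: disjoint_family_on_def disjoint_def)
  have "emeasure M (\<Union>RR) = (\<integral>\<^sup>+R. emeasure M R \<partial>count_space RR)"
    using emeasure_UN_countable[of RR "\<lambda>R. R" M] assms(1,3) disj by auto
  also have "\<dots> \<le> (\<integral>\<^sup>+R. emeasure (density M g) R \<partial>count_space RR)"
    using assms(3,4,5) by (intro nn_integral_mono) (auto simp: emeasure_density)
  also have "\<dots> = emeasure (density M g) (\<Union>RR)"
    using emeasure_UN_countable[of RR "\<lambda>R. R" "density M g"] assms(1,3) disj
    by (auto simp: subset_eq)
  also have "\<dots> = (\<integral>\<^sup>+x\<in>\<Union>RR. g x \<partial>M)"
    using assms(1,3,4) by (intro emeasure_density) auto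
  finally show ?thesis .
qed

lemma nn_integral_count_space_UN_disjoint:
  assumes "finite R" "disjoint_family_on P R"
  shows "(\<integral>\<^sup>+z. g z \<partial>count_space (\<Union>r\<in>R. P r)) = (\<Sum>r\<in>R. \<integral>\<^sup>+z. g z \<partial>count_space (P r))"
proof -
  have "(\<integral>\<^sup>+z. g z \<partial>count_space (\<Union>r\<in>R. P r)) =
      (\<integral>\<^sup>+z. (\<Sum>r\<in>R. g z * indicator (P r) z) \<partial>count_space UNIV)"
    by (simp add: nn_integral_count_space_indicator indicator_UN_disjoint[OF assms] sum_distrib_left)
  also have "\<dots> = (\<Sum>r\<in>R. \<integral>\<^sup>+z. g z * indicator (P r) z \<partial>count_space UNIV)"
    by (rule nn_integral_sum) simp
  finally show ?thesis
    by (simp add: nn_integral_count_space_indicator)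
qed

lemma borel_measurable_loc_integrable:
  assumes "loc_integrable f"
  shows "f \<in> borel_measurable lebesgue"
proof (rule borel_measurable_LIMSEQ_real)
  show "(\<lambda>i. indicator (cball 0 (real i)) x * f x) \<longlonglongrightarrow> f x" for x
  proof (rule tendsto_eventually)
    have "norm x \<le> real i" if "nat \<lceil>norm x\<rceil> \<le> i" for i
      using that real_nat_ceiling_ge[of "norm x"] by linarith
    then show "\<forall>\<^sub>F i in sequentially. indicator (cball 0 (real i)) x * f x = f x"
      using eventually_ge_at_top[of "nat \<lceil>norm x\<rceil>"]
      by (auto elim!: eventually_mono simp: indicator_def)
  qed
  show "(\<lambda>x. indicator (cball 0 (real i)) x * f x) \<in> borel_measurable lebesgue" for i
  proof -
    have "set_integrable lebesgue (cball 0 (real i)) f"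
      using assms unfolding loc_integrable_def by auto
    then have "(\<lambda>x. indicator (cball 0 (real i)) x *\<^sub>R f x) \<in> borel_measurable lebesgue"
      unfolding set_integrable_def by (rule borel_measurable_integrable)
    then show ?thesis
      by simp
  qed
qed

section \<open>Dyadic cubes and sparse families\<close>

lemma mem_dyadic_cube:
  "x \<in> dyadic_cube k m \<longleftrightarrow> (\<forall>i. m i = \<lfloor>2 powr real_of_int k * x $ i\<rfloor>)"
proof -
  have "2 powr (- real_of_int k) * real_of_int (m i) \<le> x $ i \<and>
        x $ i < 2 powr (- real_of_int k) * (real_of_int (m i) + 1) \<longleftrightarrow>
        m i = \<lfloor>2 powr real_of_int k * x $ i\<rfloor>" for i
  proof -
    have pos: "0 < 2 powr real_of_int k"
      by simp
    have "2 powr (- real_of_int k) * real_of_int (m i) \<le> x $ i \<longleftrightarrow>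
          real_of_int (m i) \<le> 2 powr real_of_int k * x $ i"
         "x $ i < 2 powr (- real_of_int k) * (real_of_int (m i) + 1) \<longleftrightarrow>
          2 powr real_of_int k * x $ i < real_of_int (m i) + 1"
      using pos by (simp_all add: powr_minus field_simps)
    then show ?thesis
      using floor_eq_iff[of "2 powr real_of_int k * x $ i" "m i"] by auto
  qed
  then show ?thesis
    unfolding dyadic_cube_def by auto
qed

lemma box_subset_dyadic_cube:
  "box (\<chi> i. 2 powr (- real_of_int k) * real_of_int (m i))
       (\<chi> i. 2 powr (- real_of_int k) * (real_of_int (m i) + 1)) \<subseteq> dyadic_cube k m"
  unfolding dyadic_cube_def by (auto simp: mem_box_cart less_imp_le)

lemma dyadic_cube_subset_cbox:
  "dyadic_cube k m \<subseteq> cbox (\<chi> i. 2 powr (- real_of_int k) * real_of_int (m i))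
                             (\<chi> i. 2 powr (- real_of_int k) * (real_of_int (m i) + 1))"
  unfolding dyadic_cube_def by (auto simp: mem_box_cart less_imp_le)

lemma sets_dyadic_cube [measurable]: "dyadic_cube k m \<in> sets lebesgue"
proof -
  have "dyadic_cube k m =
    (\<Inter>i. {x. 2 powr (- real_of_int k) * real_of_int (m i) \<le> x $ i} \<inter>
         {x. x $ i < 2 powr (- real_of_int k) * (real_of_int (m i) + 1)})"
    unfolding dyadic_cube_def by auto
  also have "\<dots> \<in> sets borel"
    by (intro sets.countable_INT' sets.Int borel_closed borel_open closed_Collect_le
        open_Collect_less continuous_intros) auto
  finally show ?thesis by auto
qed

lemma fmeasurable_dyadic_cube: "dyadic_cube k m \<in> fmeasurable lebesgue"
  by (rule fmeasurableI2[OF lmeasurable_cbox dyadic_cube_subset_cbox sets_dyadic_cube])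

lemma measure_dyadic_cube:
  "measure lebesgue (dyadic_cube k (m :: 'n::finite \<Rightarrow> int)) =
     2 powr (- real_of_int k * real CARD('n))"
proof -
  define a :: "real^'n" where "a = (\<chi> i. 2 powr (- real_of_int k) * real_of_int (m i))"
  define b :: "real^'n" where "b = (\<chi> i. 2 powr (- real_of_int k) * (real_of_int (m i) + 1))"
  have ab: "\<forall>i\<in>Basis. a \<bullet> i \<le> b \<bullet> i"
    by (auto simp: a_def b_def Basis_vec_def cart_eq_inner_axis[symmetric] inner_axis)
  have "measure lborel (cbox a b) = (\<Prod>i\<in>UNIV. b $ i - a $ i)"
    by (rule content_cbox_cart) (auto simp: box_ne_empty ab)
  also have "\<dots> = (2 powr (- real_of_int k)) ^ CARD('n)"
    by (simp add: a_def b_def algebra_simps)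
  finally have cbox: "measure lebesgue (cbox a b) = (2 powr (- real_of_int k)) ^ CARD('n)"
    by (simp add: measure_completion)
  have "measure lebesgue (box a b) = measure lebesgue (cbox a b)"
    by (simp add: measure_completion measure_lborel_box_eq measure_lborel_cbox_eq ab)
  moreover have "measure lebesgue (box a b) \<le> measure lebesgue (dyadic_cube k m)"
    using box_subset_dyadic_cube fmeasurable_dyadic_cube
    by (intro measure_mono_fmeasurable) (auto simp: a_def b_def)
  moreover have "measure lebesgue (dyadic_cube k m) \<le> measure lebesgue (cbox a b)"
    using dyadic_cube_subset_cbox
    by (intro measure_mono_fmeasurable) (auto simp: a_def b_def)
  ultimately have "measure lebesgue (dyadic_cube k m) = (2 powr (- real_of_int k)) ^ CARD('n)"
    using cbox by linarith
  then show ?thesis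
    by (simp add: powr_realpow[symmetric] powr_powr)
qed

lemma dyadic_cube_nonempty: "dyadic_cube k m \<noteq> {}"
proof -
  have "2 powr real_of_int k * (2 powr (- real_of_int k) * y) = y" for y
    by (simp add: mult.assoc[symmetric] powr_add[symmetric])
  then have "(\<chi> i. 2 powr (- real_of_int k) * real_of_int (m i)) \<in> dyadic_cube k m"
    unfolding mem_dyadic_cube by (simp only: vec_lambda_beta floor_of_int) simp
  then show ?thesis by blast
qed

lemma dyadic_cubesI [intro, simp]: "dyadic_cube k m \<in> dyadic_cubes"
  by (auto simp: dyadic_cubes_def)

lemma dyadic_cubesE:
  assumes "Q \<in> dyadic_cubes"
  obtains k m where "Q = dyadic_cube k m"
  using assms by (auto simp: dyadic_cubes_def)

lemma countable_dyadic_cubes: "countable (dyadic_cubes :: (real^'n::finite) set set)"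
proof -
  have "dyadic_cubes = (\<lambda>(k, m::'n \<Rightarrow> int). dyadic_cube k m) ` UNIV"
    by (auto simp: dyadic_cubes_def)
  then show ?thesis
    using countable_image[of UNIV "\<lambda>(k, m::'n \<Rightarrow> int). dyadic_cube k m"] by simp
qed

lemma sets_dyadic_cubes: "Q \<in> dyadic_cubes \<Longrightarrow> Q \<in> sets lebesgue"
  by (auto elim!: dyadic_cubesE)

lemma fmeasurable_dyadic_cubes: "Q \<in> dyadic_cubes \<Longrightarrow> Q \<in> fmeasurable lebesgue"
  by (auto elim!: dyadic_cubesE simp: fmeasurable_dyadic_cube)

lemma emeasure_dyadic_cubes:
  "Q \<in> dyadic_cubes \<Longrightarrow> emeasure lebesgue Q = ennreal (measure lebesgue Q)"
  by (rule emeasure_eq_measure2[OF fmeasurable_dyadic_cubes])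

lemma measure_dyadic_cubes_pos: "Q \<in> dyadic_cubes \<Longrightarrow> 0 < measure lebesgue Q"
  by (auto elim!: dyadic_cubesE simp: measure_dyadic_cube)

definition dyadic_ancestor :: "nat \<Rightarrow> int \<Rightarrow> ('n::finite \<Rightarrow> int) \<Rightarrow> (real^'n) set" where
  "dyadic_ancestor j k m = dyadic_cube (k - int j) (\<lambda>i. m i div 2 ^ j)"

lemma dyadic_ancestor_in_dyadic_cubes [simp]: "dyadic_ancestor j k m \<in> dyadic_cubes"
  by (simp add: dyadic_ancestor_def)

lemma sets_dyadic_ancestor [measurable]: "dyadic_ancestor j k m \<in> sets lebesgue"
  by (simp add: dyadic_ancestor_def)

lemma dyadic_ancestor_0 [simp]: "dyadic_ancestor 0 k m = dyadic_cube k m"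
  by (simp add: dyadic_ancestor_def)

lemma dyadic_ancestor_add:
  "dyadic_ancestor (j + j') k m = dyadic_ancestor j' (k - int j) (\<lambda>i. m i div 2 ^ j)"
proof -
  have div: "(\<lambda>i. m i div 2 ^ j div 2 ^ j') = (\<lambda>i. m i div 2 ^ (j + j'))"
    by (simp add: zdiv_zmult2_eq power_add)
  have k: "k - int j - int j' = k - int (j + j')"
    by simp
  show ?thesis
    unfolding dyadic_ancestor_def div k ..
qed

lemma measure_dyadic_ancestor:
  "measure lebesgue (dyadic_ancestor j k (m :: 'n::finite \<Rightarrow> int)) =
     2 powr (real j * real CARD('n)) * measure lebesgue (dyadic_cube k m)"
  by (simp add: dyadic_ancestor_def measure_dyadic_cube powr_add[symmetric] algebra_simps)

lemma floor_two_powr_diff_mult: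
  "\<lfloor>2 powr (real_of_int k - real j) * y\<rfloor> = \<lfloor>2 powr real_of_int k * y\<rfloor> div 2 ^ j"
proof -
  have eq: "2 powr (real_of_int k - real j) * y = 2 powr real_of_int k * y / real_of_int ((2::int) ^ j)"
    by (simp add: powr_diff powr_realpow)
  have "\<lfloor>2 powr real_of_int k * y / real_of_int ((2::int) ^ j)\<rfloor> = \<lfloor>2 powr real_of_int k * y\<rfloor> div 2 ^ j"
    by (rule floor_divide_real_eq_div) simp
  then show ?thesis
    by (simp only: eq)
qed

lemma dyadic_cube_subset_ancestor: "dyadic_cube k m \<subseteq> dyadic_ancestor j k m"
proof
  fix x
  assume "x \<in> dyadic_cube k m"
  then have "\<forall>i. m i = \<lfloor>2 powr real_of_int k * x $ i\<rfloor>"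
    by (simp add: mem_dyadic_cube)
  then show "x \<in> dyadic_ancestor j k m"
    by (simp add: dyadic_ancestor_def mem_dyadic_cube floor_two_powr_diff_mult)
qed

lemma dyadic_cube_eq_ancestor:
  assumes "x \<in> dyadic_cube k m" "x \<in> dyadic_cube k' m'" "k' \<le> k"
  shows "dyadic_cube k' m' = dyadic_ancestor (nat (k - k')) k m"
proof -
  define d where "d = nat (k - k')"
  have k': "k - int d = k'" "real_of_int k' = real_of_int k - real d"
    using assms(3) by (simp_all add: d_def)
  have "m' i = m i div 2 ^ d" for i
  proof -
    have "m' i = \<lfloor>2 powr real_of_int k' * x $ i\<rfloor>"
      using assms(2) by (simp add: mem_dyadic_cube)
    also have "\<dots> = m i div 2 ^ d"
      using assms(1) by (simp add: k'(2) floor_two_powr_diff_mult mem_dyadic_cube)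
    finally show ?thesis .
  qed
  then have "m' = (\<lambda>i. m i div 2 ^ d)"
    by blast
  then show ?thesis
    unfolding d_def[symmetric] dyadic_ancestor_def k'(1) by simp
qed

lemma dyadic_ancestor_mono:
  assumes "j \<le> j'"
  shows "dyadic_ancestor j k m \<subseteq> dyadic_ancestor j' k m"
proof -
  have "dyadic_ancestor j k m \<subseteq> dyadic_ancestor (j' - j) (k - int j) (\<lambda>i. m i div 2 ^ j)"
    unfolding dyadic_ancestor_def[of j] by (rule dyadic_cube_subset_ancestor)
  also have "\<dots> = dyadic_ancestor j' k m"
    using dyadic_ancestor_add[of j "j' - j" k m] assms by simp
  finally show ?thesis .
qed

lemma dyadic_cubes_nested_or_disjoint:
  assumes "Q \<in> dyadic_cubes" "Q' \<in> dyadic_cubes" "Q \<inter> Q' \<noteq> {}"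
  shows "Q \<subseteq> Q' \<or> Q' \<subseteq> Q"
proof -
  obtain k m k' m' where Q: "Q = dyadic_cube k m" and Q': "Q' = dyadic_cube k' m'"
    using assms(1,2) by (auto elim!: dyadic_cubesE)
  obtain x where "x \<in> Q" "x \<in> Q'"
    using assms(3) by blast
  show ?thesis
  proof (cases "k' \<le> k")
    case True
    then have "Q' = dyadic_ancestor (nat (k - k')) k m"
      using dyadic_cube_eq_ancestor \<open>x \<in> Q\<close> \<open>x \<in> Q'\<close> unfolding Q Q' by blast
    then show ?thesis
      unfolding Q using dyadic_cube_subset_ancestor by blast
  next
    case False
    then have "Q = dyadic_ancestor (nat (k' - k)) k' m'"
      using dyadic_cube_eq_ancestor \<open>x \<in> Q\<close> \<open>x \<in> Q'\<close> unfolding Q Q' by force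
    then show ?thesis
      unfolding Q' using dyadic_cube_subset_ancestor by blast
  qed
qed

lemma dyadic_superset_eq_ancestor:
  assumes "Q \<in> dyadic_cubes" "dyadic_cube k m \<subseteq> Q"
  obtains j where "Q = dyadic_ancestor j k m"
proof -
  obtain k' m' where Q: "Q = dyadic_cube k' m'"
    using assms(1) by (rule dyadic_cubesE)
  obtain x where x: "x \<in> dyadic_cube k m"
    using dyadic_cube_nonempty by blast
  show ?thesis
  proof (cases "k' \<le> k")
    case True
    then show ?thesis
      using that x assms(2) dyadic_cube_eq_ancestor unfolding Q by blast
  next
    case False
    then have "dyadic_cube k m = dyadic_ancestor (nat (k' - k)) k' m'"
      using x assms(2) dyadic_cube_eq_ancestor[of x k' m' k m] unfolding Q by auto
    then have "Q \<subseteq> dyadic_cube k m"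
      unfolding Q by (metis dyadic_cube_subset_ancestor)
    then show ?thesis
      using that[of 0] assms(2) by auto
  qed
qed

lemma measure_dyadic_ancestor_Diff_ge:
  "measure lebesgue (dyadic_ancestor (Suc j) k m) / 2 \<le>
    measure lebesgue (dyadic_ancestor (Suc j) k (m :: 'n::finite \<Rightarrow> int) - dyadic_ancestor j k m)"
proof -
  let ?A = "\<lambda>j. dyadic_ancestor j k m"
  have "measure lebesgue (?A (Suc j)) - measure lebesgue (?A j) \<le> measure lebesgue (?A (Suc j) - ?A j)"
    by (intro measure_diff_le_measure_setdiff fmeasurable_dyadic_cubes) simp_all
  moreover have "measure lebesgue (?A (Suc j)) = 2 powr real CARD('n) * measure lebesgue (?A j)"
    unfolding measure_dyadic_ancestor by (simp add: powr_add[symmetric] algebra_simps)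
  moreover have "2 * measure lebesgue (?A j) \<le> 2 powr real CARD('n) * measure lebesgue (?A j)"
    using powr_mono[of 1 "real CARD('n)" 2] by (intro mult_right_mono) auto
  ultimately show ?thesis
    by linarith
qed

lemma sparse_dyadic_ancestors: "sparse UNIV (\<lambda>j. dyadic_ancestor j k m)"
proof -
  let ?A = "\<lambda>j. dyadic_ancestor j k m"
  have "mono ?A"
    by (intro monoI dyadic_ancestor_mono)
  then have "measure lebesgue (?A j) / 2 \<le> measure lebesgue (disjointed ?A j)" for j
    using measure_dyadic_ancestor_Diff_ge[of "j - 1" k m] by (cases j) (simp_all add: disjointed_mono)
  moreover have "range ?A \<subseteq> sets lebesgue"
    by (auto intro: sets_dyadic_ancestor)
  then have "range (disjointed ?A) \<subseteq> sets lebesgue"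
    by (rule sets.range_disjointed_sets)
  ultimately show ?thesis
    unfolding sparse_def using disjoint_family_disjointed[of ?A] disjointed_subset[of ?A]
    by (intro conjI exI[of _ "disjointed ?A"] ballI) auto
qed

lemma set_integrable_dyadic_cubes:
  assumes "loc_integrable f" "Q \<in> dyadic_cubes"
  shows "set_integrable lebesgue Q f"
proof -
  obtain k m where Q: "Q = dyadic_cube k m"
    using assms(2) by (rule dyadic_cubesE)
  have "set_integrable lebesgue (cbox (\<chi> i. 2 powr (- real_of_int k) * real_of_int (m i))
      (\<chi> i. 2 powr (- real_of_int k) * (real_of_int (m i) + 1))) f"
    using assms(1) unfolding loc_integrable_def by auto
  then show ?thesis
    unfolding Q by (rule set_integrable_subset) (auto simp: dyadic_cube_subset_cbox)
qed

lemma set_integral_abs_mono_dyadic: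
  assumes "loc_integrable f" "R \<in> dyadic_cubes" "Q \<in> dyadic_cubes" "R \<subseteq> Q"
  shows "(LINT y:R|lebesgue. \<bar>f y\<bar>) \<le> (LINT y:Q|lebesgue. \<bar>f y\<bar>)"
proof -
  have "ennreal (LINT y:R|lebesgue. \<bar>f y\<bar>) = (\<integral>\<^sup>+x\<in>R. ennreal \<bar>f x\<bar> \<partial>lebesgue)"
    using assms by (simp add: nn_set_integral_abs set_integrable_dyadic_cubes sets_dyadic_cubes)
  also have "\<dots> \<le> (\<integral>\<^sup>+x\<in>Q. ennreal \<bar>f x\<bar> \<partial>lebesgue)"
    using assms(4) by (rule nn_set_integral_set_mono)
  also have "\<dots> = ennreal (LINT y:Q|lebesgue. \<bar>f y\<bar>)"
    using assms by (simp add: nn_set_integral_abs set_integrable_dyadic_cubes sets_dyadic_cubes)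
  finally show ?thesis
    by (simp only: ennreal_le_iff[OF set_integral_abs_nonneg])
qed

lemma nn_set_integral_scaled_abs:
  assumes loc_int: "loc_integrable f" and K: "0 \<le> K" and A: "A \<in> dyadic_cubes"
  shows "(\<integral>\<^sup>+x\<in>A. ennreal (K * \<bar>f x\<bar>) \<partial>lebesgue) = ennreal (K * (LINT y:A|lebesgue. \<bar>f y\<bar>))"
proof -
  have [measurable]: "f \<in> borel_measurable lebesgue" "A \<in> sets lebesgue"
    using borel_measurable_loc_integrable[OF loc_int] sets_dyadic_cubes[OF A] .
  have "(\<integral>\<^sup>+x\<in>A. ennreal (K * \<bar>f x\<bar>) \<partial>lebesgue) =
      (\<integral>\<^sup>+x. ennreal K * (ennreal \<bar>f x\<bar> * indicator A x) \<partial>lebesgue)"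
    using K by (simp add: ennreal_mult mult.assoc)
  also have "\<dots> = ennreal K * (\<integral>\<^sup>+x\<in>A. ennreal \<bar>f x\<bar> \<partial>lebesgue)"
    by (rule nn_integral_cmult) measurable
  also have "\<dots> = ennreal (K * (LINT y:A|lebesgue. \<bar>f y\<bar>))"
    using K A loc_int set_integral_abs_nonneg[where Q = A and M = lebesgue and f = f]
    by (simp add: nn_set_integral_abs set_integrable_dyadic_cubes sets_dyadic_cubes ennreal_mult)
  finally show ?thesis .
qed

lemma bij_betw_from_nat_into_to_nat_on:
  "countable S \<Longrightarrow> bij_betw (from_nat_into S) (to_nat_on S ` S) S"
  by (rule bij_betw_byWitness[where f' = "to_nat_on S"]) auto

lemma suminf_to_nat_on:
  fixes g :: "'a \<Rightarrow> ennreal"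
  assumes "countable S"
  shows "(\<Sum>i. if i \<in> to_nat_on S ` S then g (from_nat_into S i) else 0) = (\<integral>\<^sup>+s. g s \<partial>count_space S)"
proof -
  have "(\<Sum>i. if i \<in> to_nat_on S ` S then g (from_nat_into S i) else 0) =
      (\<integral>\<^sup>+i. g (from_nat_into S i) * indicator (to_nat_on S ` S) i \<partial>count_space UNIV)"
    unfolding nn_integral_count_space_nat by (intro arg_cong[where f = suminf] ext) (simp add: indicator_def)
  also have "\<dots> = (\<integral>\<^sup>+s. g s \<partial>count_space S)"
    using nn_integral_bij_count_space[OF bij_betw_from_nat_into_to_nat_on[OF assms], of g]
    by (simp add: nn_integral_count_space_indicator)
  finally show ?thesis .
qed

text \<open>\<^const>\<open>sparse\<close> indexes families by sets of natural numbers; any countable index set can be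
  enumerated by \<^const>\<open>to_nat_on\<close>.\<close>

lemma sparse_to_nat_on:
  assumes "countable S" "\<forall>s\<in>S. C s \<in> dyadic_cubes" "disjoint_family_on E S"
    and "\<forall>s\<in>S. E s \<in> sets lebesgue \<and> E s \<subseteq> C s \<and> measure lebesgue (C s) / 2 \<le> measure lebesgue (E s)"
  shows "sparse (to_nat_on S ` S) (C \<circ> from_nat_into S)"
  unfolding sparse_def
proof (intro conjI exI[of _ "E \<circ> from_nat_into S"])
  let ?I = "to_nat_on S ` S"
  have from_nat: "from_nat_into S i \<in> S" "inj_on (from_nat_into S) ?I" if "i \<in> ?I" for i
    using that bij_betw_from_nat_into_to_nat_on[OF assms(1)] by (auto simp: bij_betw_def)
  show "\<forall>i\<in>?I. (C \<circ> from_nat_into S) i \<in> dyadic_cubes"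
    using from_nat assms(2) by auto
  show "disjoint_family_on (E \<circ> from_nat_into S) ?I"
    unfolding disjoint_family_on_def
  proof (intro ballI impI)
    fix i j
    assume "i \<in> ?I" "j \<in> ?I" "i \<noteq> j"
    then have "from_nat_into S i \<noteq> from_nat_into S j"
      using from_nat(2) by (auto dest: inj_onD)
    then show "(E \<circ> from_nat_into S) i \<inter> (E \<circ> from_nat_into S) j = {}"
      using assms(3) from_nat(1) \<open>i \<in> ?I\<close> \<open>j \<in> ?I\<close> unfolding disjoint_family_on_def by auto
  qed
  show "\<forall>i\<in>?I. (E \<circ> from_nat_into S) i \<in> sets lebesgue \<and> (E \<circ> from_nat_into S) i \<subseteq> (C \<circ> from_nat_into S) i \<and>
      measure lebesgue ((C \<circ> from_nat_into S) i) / 2 \<le> measure lebesgue ((E \<circ> from_nat_into S) i)"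
    using from_nat assms(4) by auto
qed

section \<open>The logarithmic weight\<close>

lemma log_weight_le_scaled:
  fixes s c \<alpha> :: real
  assumes "0 < s" "1 \<le> c"
  shows "(1 - min (ln s) 0) powr \<alpha> \<le> (1 + ln c) powr (max \<alpha> 0) * (1 - min (ln (c * s)) 0) powr \<alpha>"
proof -
  define Ls where "Ls = 1 - min (ln s) 0"
  define Lcs where "Lcs = 1 - min (ln (c * s)) 0"
  have ln_c: "0 \<le> ln c"
    using assms by simp
  have ln_cs: "ln (c * s) = ln c + ln s"
    using assms by (simp add: ln_mult)
  have Lcs_ge: "1 \<le> Lcs"
    by (simp add: Lcs_def)
  have Lcs_le: "Lcs \<le> Ls"
    using ln_cs ln_c by (simp add: Ls_def Lcs_def)
  have "Ls \<le> Lcs + ln c"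
    using ln_cs ln_c by (simp add: Ls_def Lcs_def)
  also have "\<dots> \<le> (1 + ln c) * Lcs"
    using Lcs_ge ln_c mult_right_mono[of 1 Lcs "ln c"] by (simp add: algebra_simps)
  finally have Ls_le: "Ls \<le> (1 + ln c) * Lcs" .
  show ?thesis
  proof (cases "0 \<le> \<alpha>")
    case True
    have "Ls powr \<alpha> \<le> ((1 + ln c) * Lcs) powr \<alpha>"
      using True Ls_le Lcs_ge Lcs_le by (intro powr_mono2) auto
    also have "\<dots> = (1 + ln c) powr \<alpha> * Lcs powr \<alpha>"
      using ln_c Lcs_ge by (simp add: powr_mult)
    finally show ?thesis
      using True by (simp add: Ls_def Lcs_def)
  next
    case False
    have "Ls powr \<alpha> \<le> Lcs powr \<alpha>"
      using False Lcs_ge Lcs_le by (intro powr_mono2') auto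
    then show ?thesis
      using False ln_c by (simp add: Ls_def Lcs_def)
  qed
qed

lemma one_plus_powr_le_exp:
  fixes d N \<alpha> :: real
  assumes "0 \<le> d" "1 \<le> N" "0 \<le> \<alpha>"
  shows "(1 + d) powr \<alpha> \<le> N powr \<alpha> * exp (\<alpha> * d / N)"
proof -
  have "1 + d \<le> N * exp (d / N)"
    using exp_ge_add_one_self[of "d / N"] assms(2) mult_left_mono[of "1 + d / N" "exp (d / N)" N]
    by (simp add: field_simps)
  then have "(1 + d) powr \<alpha> \<le> (N * exp (d / N)) powr \<alpha>"
    using assms by (intro powr_mono2) auto
  also have "\<dots> = N powr \<alpha> * exp (\<alpha> * d / N)"
    using assms(2) by (simp add: powr_def ln_mult exp_add[symmetric] algebra_simps)
  finally show ?thesis .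
qed

text \<open>For \<open>\<alpha> > 0\<close> the logarithmic factor grows as \<open>s\<close> decreases, but only by a factor
  \<open>(1 + d)\<^sup>\<alpha> \<le> N\<^sup>\<alpha> exp (\<alpha> d / N)\<close> with \<open>d \<le> ln (t / s)\<close>, which the power \<open>(t / s)\<^sup>a\<close>
  absorbs once \<open>N \<ge> \<alpha> / a\<close>.\<close>

lemma powr_log_weight_le_pos:
  fixes a \<alpha> s t :: real
  assumes "0 < a" "0 < \<alpha>" "0 < s" "s \<le> t"
  shows "s powr a * (1 - min (ln s) 0) powr \<alpha> \<le>
    max 1 (\<alpha> / a) powr \<alpha> * (t powr a * (1 - min (ln t) 0) powr \<alpha>)"
proof -
  define N where "N = max 1 (\<alpha> / a)"
  define u where "u = max (- ln s) 0"
  define v where "v = max (- ln t) 0"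
  define d where "d = u - v"
  have N_ge: "1 \<le> N" and N_le: "\<alpha> / N \<le> a"
    using assms(1) by (auto simp: N_def max_def field_simps)
  have d_nonneg: "0 \<le> d" and d_le: "d \<le> ln t - ln s" and v_nonneg: "0 \<le> v"
    using assms(3,4) by (auto simp: d_def u_def v_def max_def)
  have u_le: "1 + u \<le> (1 + v) * (1 + d)"
    using d_nonneg v_nonneg mult_right_mono[of v u v] by (simp add: d_def algebra_simps)
  have "\<alpha> * d / N \<le> a * (ln t - ln s)"
    using mult_mono[OF N_le d_le] assms(1,2) N_ge d_nonneg by (simp add: mult.commute)
  have "(1 + d) powr \<alpha> \<le> N powr \<alpha> * exp (\<alpha> * d / N)"
    using d_nonneg N_ge assms(2) by (intro one_plus_powr_le_exp) auto
  also have "\<dots> \<le> N powr \<alpha> * exp (a * (ln t - ln s))"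
    using \<open>\<alpha> * d / N \<le> a * (ln t - ln s)\<close> by (intro mult_left_mono) auto
  also have "exp (a * (ln t - ln s)) = t powr a / s powr a"
    using assms(3,4) by (simp add: powr_def exp_diff algebra_simps)
  finally have d_bound: "(1 + d) powr \<alpha> \<le> N powr \<alpha> * (t powr a / s powr a)" .
  have "s powr a * (1 + u) powr \<alpha> \<le> s powr a * ((1 + v) * (1 + d)) powr \<alpha>"
    using u_le assms(2) by (intro mult_left_mono powr_mono2) (auto simp: u_def)
  also have "\<dots> = s powr a * (1 + v) powr \<alpha> * (1 + d) powr \<alpha>"
    using v_nonneg d_nonneg by (simp add: powr_mult)
  also have "\<dots> \<le> s powr a * (1 + v) powr \<alpha> * (N powr \<alpha> * (t powr a / s powr a))"
    using d_bound v_nonneg by (intro mult_left_mono) auto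
  also have "\<dots> = N powr \<alpha> * (t powr a * (1 + v) powr \<alpha>)"
    using assms(3) by (simp add: field_simps)
  moreover have "1 - min (ln s) 0 = 1 + u" "1 - min (ln t) 0 = 1 + v"
    by (simp_all add: u_def v_def)
  ultimately show ?thesis
    by (simp only: N_def)
qed

lemma powr_log_weight_quasi_mono:
  fixes a \<alpha> :: real
  assumes "0 \<le> a" "a = 0 \<longrightarrow> \<alpha> \<le> 0"
  obtains C where "0 < C" "\<And>s t. 0 < s \<Longrightarrow> s \<le> t \<Longrightarrow>
     s powr a * (1 - min (ln s) 0) powr \<alpha> \<le> C * (t powr a * (1 - min (ln t) 0) powr \<alpha>)"
proof (cases "\<alpha> \<le> 0")
  case True
  show ?thesis
  proof (rule that[of 1])
    fix s t :: real
    assume st: "0 < s" "s \<le> t"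
    then have "s powr a \<le> t powr a" "ln s \<le> ln t"
      using assms by (auto intro: powr_mono2)
    moreover from \<open>ln s \<le> ln t\<close> have "(1 - min (ln s) 0) powr \<alpha> \<le> (1 - min (ln t) 0) powr \<alpha>"
      using True by (intro powr_mono2') auto
    ultimately show "s powr a * (1 - min (ln s) 0) powr \<alpha> \<le> 1 * (t powr a * (1 - min (ln t) 0) powr \<alpha>)"
      by (simp add: mult_mono)
  qed simp
next
  case False
  with assms have "0 < a" "0 < \<alpha>"
    by auto
  then show ?thesis
    using that[of "max 1 (\<alpha> / a) powr \<alpha>"] powr_log_weight_le_pos by simp
qed

lemma logw_pos: "0 < logw \<alpha> Q"
  by (simp add: logw_def)

lemma weighted_measure_quasi_mono:
  fixes a \<alpha> :: real
  assumes "0 \<le> a" "a = 0 \<longrightarrow> \<alpha> \<le> 0"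
  obtains C where "0 < C" "\<And>R Q. R \<in> dyadic_cubes \<Longrightarrow> Q \<in> (dyadic_cubes :: (real^'n::finite) set set) \<Longrightarrow>
    R \<subseteq> Q \<Longrightarrow> measure lebesgue R powr a * logw \<alpha> R \<le> C * (measure lebesgue Q powr a * logw \<alpha> Q)"
proof -
  obtain C where C: "0 < C" "\<And>s t. 0 < s \<Longrightarrow> s \<le> t \<Longrightarrow>
     s powr a * (1 - min (ln s) 0) powr \<alpha> \<le> C * (t powr a * (1 - min (ln t) 0) powr \<alpha>)"
    using powr_log_weight_quasi_mono[OF assms] by blast
  have "measure lebesgue R powr a * logw \<alpha> R \<le> C * (measure lebesgue Q powr a * logw \<alpha> Q)"
    if "R \<in> dyadic_cubes" "Q \<in> dyadic_cubes" "R \<subseteq> Q" for R Q :: "(real^'n) set"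
  proof -
    have "measure lebesgue R \<le> measure lebesgue Q"
      using that by (intro measure_mono_fmeasurable) (auto simp: sets_dyadic_cubes fmeasurable_dyadic_cubes)
    then show ?thesis
      unfolding logw_def by (rule C(2)[OF measure_dyadic_cubes_pos[OF that(1)]])
  qed
  then show ?thesis
    using C(1) that by blast
qed

section \<open>Weighted averages\<close>

context
  fixes a \<alpha> :: real and f :: "real^'n::finite \<Rightarrow> real"
begin

definition weighted_average :: "(real^'n) set \<Rightarrow> real" where
  "weighted_average Q = measure lebesgue Q powr (a - 1) * logw \<alpha> Q * (LINT y:Q|lebesgue. \<bar>f y\<bar>)"

definition sparse_sum :: "real \<Rightarrow> nat set \<Rightarrow> (nat \<Rightarrow> (real^'n) set) \<Rightarrow> ennreal" where
  "sparse_sum q I Q = (\<Sum>i. if i \<in> I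
     then ennreal (measure lebesgue (Q i) * weighted_average (Q i) powr q) else 0)"

lemma weighted_average_nonneg: "0 \<le> weighted_average Q"
  unfolding weighted_average_def
  by (intro mult_nonneg_nonneg set_integral_abs_nonneg) (auto simp: logw_pos less_imp_le)

lemma max_op_eq_SUP_weighted_average:
  "max_op (real CARD('n) * a) \<alpha> f x = (SUP Q\<in>{Q\<in>dyadic_cubes. x \<in> Q}. ennreal (weighted_average Q))"
  by (simp add: max_op_def weighted_average_def)

lemma weighted_average_le_max_op:
  "Q \<in> dyadic_cubes \<Longrightarrow> x \<in> Q \<Longrightarrow> ennreal (weighted_average Q) \<le> max_op (real CARD('n) * a) \<alpha> f x"
  unfolding max_op_eq_SUP_weighted_average by (intro SUP_upper) auto

lemma sparse_sum_le_max_op_integral: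
  assumes "0 \<le> q" "sparse I Q"
  shows "sparse_sum q I Q \<le> 2 * (\<integral>\<^sup>+x. enn_powr (max_op (real CARD('n) * a) \<alpha> f x) q \<partial>lebesgue)"
proof -
  let ?G = "\<lambda>x. enn_powr (max_op (real CARD('n) * a) \<alpha> f x) q"
  obtain E where cubes: "\<forall>i\<in>I. Q i \<in> dyadic_cubes" and disj: "disjoint_family_on E I"
    and E: "\<forall>i\<in>I. E i \<in> sets lebesgue \<and> E i \<subseteq> Q i \<and> measure lebesgue (Q i) / 2 \<le> measure lebesgue (E i)"
    using assms(2) unfolding sparse_def by blast
  define h where "h i x = (if i \<in> I then ennreal (weighted_average (Q i) powr q) * indicator (E i) x else 0)"
    for i x
  have h_measurable: "h i \<in> borel_measurable lebesgue" for i
  proof (cases "i \<in> I")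
    case True
    then have "E i \<in> sets lebesgue"
      using E by blast
    then show ?thesis
      using True by (simp add: h_def[abs_def])
  qed (simp add: h_def[abs_def])
  have term_le: "(if i \<in> I then ennreal (measure lebesgue (Q i) * weighted_average (Q i) powr q) else 0)
      \<le> 2 * (\<integral>\<^sup>+x. h i x \<partial>lebesgue)" for i
  proof (cases "i \<in> I")
    case True
    then have "E i \<in> fmeasurable lebesgue"
      using E cubes by (intro fmeasurableI2[OF fmeasurable_dyadic_cubes[of "Q i"]]) auto
    then show ?thesis
      using True E by (simp add: h_def measure_mult_le_nn_integral_indicator)
  qed (simp add: h_def)
  have sum_h_le: "(\<Sum>i. h i x) \<le> ?G x" for x
    unfolding h_def
  proof (rule suminf_disjoint_indicator_le[OF disj])
    fix i
    assume "i \<in> I" "x \<in> E i"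
    then show "ennreal (weighted_average (Q i) powr q) \<le> ?G x"
      using E cubes
      by (intro ennreal_powr_le_enn_powr[OF weighted_average_le_max_op weighted_average_nonneg assms(1)])
        auto
  qed
  have "sparse_sum q I Q \<le> (\<Sum>i. 2 * (\<integral>\<^sup>+x. h i x \<partial>lebesgue))"
    unfolding sparse_sum_def by (intro suminf_le term_le) auto
  also have "\<dots> = 2 * (\<integral>\<^sup>+x. (\<Sum>i. h i x) \<partial>lebesgue)"
    by (simp add: nn_integral_suminf[OF h_measurable])
  also have "\<dots> \<le> 2 * (\<integral>\<^sup>+x. ?G x \<partial>lebesgue)"
    by (intro mult_left_mono nn_integral_mono sum_h_le) auto
  finally show ?thesis .
qed

end

lemma SR_term_eq:
  assumes "q \<noteq> 0" "Q \<in> dyadic_cubes"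
  shows "SR_term p q \<alpha> f Q = measure lebesgue Q * weighted_average (1/p - 1/q) \<alpha> f Q powr q"
proof -
  let ?m = "measure lebesgue Q"
  have "?m powr (1/p - 1) = ?m powr (1/q) * ?m powr ((1/p - 1/q) - 1)"
    by (simp add: powr_add[symmetric])
  then have "SR_term p q \<alpha> f Q = (?m powr (1/q) * weighted_average (1/p - 1/q) \<alpha> f Q) powr q"
    by (simp add: SR_term_def weighted_average_def algebra_simps)
  also have "\<dots> = ?m * weighted_average (1/p - 1/q) \<alpha> f Q powr q"
    using assms measure_dyadic_cubes_pos[OF assms(2)] weighted_average_nonneg
    by (simp add: powr_mult powr_powr)
  finally show ?thesis .
qed

lemma SR_log_iff_sparse_sum_bounded:
  assumes "q \<noteq> 0"
  shows "f \<in> SR_log p q \<alpha> \<longleftrightarrow>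
    loc_integrable f \<and> (\<exists>B<\<infinity>. \<forall>I Q. sparse I Q \<longrightarrow> sparse_sum (1/p - 1/q) \<alpha> f q I Q \<le> B)"
proof -
  have "(\<Sum>i. if i \<in> I then ennreal (SR_term p q \<alpha> f (Q i)) else 0) = sparse_sum (1/p - 1/q) \<alpha> f q I Q"
    if "sparse I Q" for I Q
  proof -
    have "SR_term p q \<alpha> f (Q i) = measure lebesgue (Q i) * weighted_average (1/p - 1/q) \<alpha> f (Q i) powr q"
      if "i \<in> I" for i
      using \<open>sparse I Q\<close> that by (intro SR_term_eq[OF assms]) (auto simp: sparse_def)
    then show ?thesis
      unfolding sparse_sum_def by (intro arg_cong[where f = suminf] ext) simp
  qed
  then show ?thesis
    unfolding SR_log_def mem_Collect_eq SUP_less_infinity_iff by auto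
qed

section \<open>Stopping cubes\<close>

context
  fixes a \<alpha> :: real and f :: "real^'n::finite \<Rightarrow> real"
begin

definition stopping_cubes :: "real \<Rightarrow> (real^'n) set set" where
  "stopping_cubes t = {Q \<in> dyadic_cubes. t < weighted_average a \<alpha> f Q \<and>
     (\<forall>P\<in>dyadic_cubes. Q \<subset> P \<longrightarrow> weighted_average a \<alpha> f P \<le> t)}"

lemma stopping_cubes_dyadic: "Q \<in> stopping_cubes t \<Longrightarrow> Q \<in> dyadic_cubes"
  by (simp add: stopping_cubes_def)

lemma stopping_cubes_average_gt: "Q \<in> stopping_cubes t \<Longrightarrow> t < weighted_average a \<alpha> f Q"
  by (simp add: stopping_cubes_def)

lemma countable_stopping_cubes: "countable (stopping_cubes t)"
  by (rule countable_subset[OF _ countable_dyadic_cubes]) (auto simp: stopping_cubes_def)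

lemma stopping_cube_subset:
  assumes "Q \<in> stopping_cubes t" "R \<in> stopping_cubes t'" "t \<le> t'" "R \<inter> Q \<noteq> {}"
  shows "R \<subseteq> Q"
proof (rule ccontr)
  assume "\<not> R \<subseteq> Q"
  then have "Q \<subset> R"
    using dyadic_cubes_nested_or_disjoint assms stopping_cubes_dyadic by blast
  then have "weighted_average a \<alpha> f R \<le> t"
    using assms(1,2) by (auto simp: stopping_cubes_def)
  then show False
    using assms(2,3) stopping_cubes_average_gt by fastforce
qed

lemma stopping_cubes_disjoint: "disjoint (stopping_cubes t)"
  unfolding disjoint_def using stopping_cube_subset by blast

lemma sets_Union_stopping_cubes: "\<Union>(stopping_cubes t) \<in> sets lebesgue"
  by (intro sets.countable_Union countable_stopping_cubes)
    (auto dest: stopping_cubes_dyadic sets_dyadic_cubes)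

definition stopping_pairs :: "(int \<times> (real^'n) set) set" where
  "stopping_pairs = {(k, Q). Q \<in> stopping_cubes (2 powr real_of_int k)}"

lemma countable_stopping_pairs: "countable stopping_pairs"
proof (rule countable_subset)
  show "stopping_pairs \<subseteq> UNIV \<times> dyadic_cubes"
    by (auto simp: stopping_pairs_def dest: stopping_cubes_dyadic)
  show "countable ((UNIV :: int set) \<times> (dyadic_cubes :: (real^'n) set set))"
    using countable_dyadic_cubes by (intro countable_SIGMA) auto
qed

lemma nn_integral_stopping_pairs_indicator:
  fixes c :: "int \<times> (real^'n) set \<Rightarrow> ennreal"
  shows "(\<integral>\<^sup>+x. \<integral>\<^sup>+z. c z * indicator (snd z) x \<partial>count_space stopping_pairs \<partial>lebesgue) =
    (\<integral>\<^sup>+z. c z * emeasure lebesgue (snd z) \<partial>count_space stopping_pairs)"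
proof -
  have cube: "snd z \<in> dyadic_cubes" if "z \<in> stopping_pairs" for z
    using that stopping_cubes_dyadic by (auto simp: stopping_pairs_def)
  have sets: "snd z \<in> sets lebesgue" if "z \<in> stopping_pairs" for z
    by (rule sets_dyadic_cubes[OF cube[OF that]])
  have "(\<integral>\<^sup>+x. \<integral>\<^sup>+z. c z * indicator (snd z) x \<partial>count_space stopping_pairs \<partial>lebesgue) =
      (\<integral>\<^sup>+z. \<integral>\<^sup>+x. c z * indicator (snd z) x \<partial>lebesgue \<partial>count_space stopping_pairs)"
  proof (rule nn_integral_count_space_nn_integral[OF countable_stopping_pairs])
    fix z
    assume "z \<in> stopping_pairs"
    then have [measurable]: "snd z \<in> sets lebesgue"
      by (rule sets)
    show "(\<lambda>x. c z * indicator (snd z) x) \<in> borel_measurable lebesgue"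
      by measurable
  qed
  also have "\<dots> = (\<integral>\<^sup>+z. c z * emeasure lebesgue (snd z) \<partial>count_space stopping_pairs)"
    using sets by (intro nn_integral_cong nn_integral_cmult_indicator) simp
  finally show ?thesis .
qed

lemma stopping_pair_term_le:
  assumes "0 < q" "z \<in> stopping_pairs"
  shows "ennreal (2 powr q * 2 powr (real_of_int (fst z) * q)) * emeasure lebesgue (snd z) \<le>
    ennreal (2 powr q) * ennreal (measure lebesgue (snd z) * weighted_average a \<alpha> f (snd z) powr q)"
proof -
  have Q: "snd z \<in> stopping_cubes (2 powr real_of_int (fst z))" "snd z \<in> dyadic_cubes"
    using assms(2) stopping_cubes_dyadic by (auto simp: stopping_pairs_def)
  have "2 powr (real_of_int (fst z) * q) \<le> weighted_average a \<alpha> f (snd z) powr q"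
    using stopping_cubes_average_gt[OF Q(1)] assms(1)
    by (simp add: powr_powr[symmetric] powr_mono2 less_imp_le)
  then have "measure lebesgue (snd z) * 2 powr (real_of_int (fst z) * q) \<le>
      measure lebesgue (snd z) * weighted_average a \<alpha> f (snd z) powr q"
    by (rule mult_left_mono) simp
  then have "ennreal (2 powr q * (measure lebesgue (snd z) * 2 powr (real_of_int (fst z) * q))) \<le>
      ennreal (2 powr q * (measure lebesgue (snd z) * weighted_average a \<alpha> f (snd z) powr q))"
    using mult_left_mono[of _ _ "2 powr q"] by (intro ennreal_leI) simp
  then show ?thesis
    unfolding emeasure_dyadic_cubes[OF Q(2)]
    by (simp add: ennreal_mult[symmetric] mult.commute mult.left_commute)
qed

lemma measure_times_weighted_average:
  assumes "Q \<in> dyadic_cubes"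
  shows "measure lebesgue Q * weighted_average a \<alpha> f Q =
    measure lebesgue Q powr a * logw \<alpha> Q * (LINT y:Q|lebesgue. \<bar>f y\<bar>)"
proof -
  have "measure lebesgue Q * measure lebesgue Q powr (a - 1) = measure lebesgue Q powr a"
    using measure_dyadic_cubes_pos[OF assms] powr_add[of "measure lebesgue Q" 1 "a - 1"] by simp
  then show ?thesis
    unfolding weighted_average_def by (simp add: algebra_simps)
qed

context
  assumes loc_int: "loc_integrable f" and a_nonneg: "0 \<le> a"
begin

lemma weighted_average_le_parent:
  "weighted_average a \<alpha> f (dyadic_cube k m) \<le>
     2 powr real CARD('n) * (1 + ln (2 powr real CARD('n))) powr (max \<alpha> 0) *
     weighted_average a \<alpha> f (dyadic_ancestor 1 k m)"
proof -
  define Q where "Q = dyadic_cube k m"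
  define P where "P = dyadic_ancestor 1 k m"
  define c :: real where "c = 2 powr real CARD('n)"
  have c_ge: "2 \<le> c"
    using powr_mono[of 1 "real CARD('n)" 2] by (simp add: c_def)
  have Q_pos: "0 < measure lebesgue Q"
    by (simp add: Q_def measure_dyadic_cubes_pos)
  have P_eq: "measure lebesgue P = c * measure lebesgue Q"
    by (simp add: P_def Q_def c_def measure_dyadic_ancestor)
  have "1 \<le> c powr a"
    using c_ge a_nonneg by (simp add: ge_one_powr_ge_zero)
  then have measure_factor: "measure lebesgue Q powr (a - 1) \<le> c * measure lebesgue P powr (a - 1)"
    using c_ge Q_pos mult_right_mono[of 1 "c powr a" "measure lebesgue Q powr (a - 1)"]
    by (simp add: P_eq powr_mult powr_diff field_simps)
  have log_factor: "logw \<alpha> Q \<le> (1 + ln c) powr (max \<alpha> 0) * logw \<alpha> P"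
    unfolding logw_def P_eq using log_weight_le_scaled[OF Q_pos, of c \<alpha>] c_ge by simp
  have integral_factor: "(LINT y:Q|lebesgue. \<bar>f y\<bar>) \<le> (LINT y:P|lebesgue. \<bar>f y\<bar>)"
    using loc_int by (intro set_integral_abs_mono_dyadic) (auto simp: P_def Q_def dyadic_cube_subset_ancestor)
  have "weighted_average a \<alpha> f Q \<le> (c * measure lebesgue P powr (a - 1)) *
      ((1 + ln c) powr (max \<alpha> 0) * logw \<alpha> P) * (LINT y:P|lebesgue. \<bar>f y\<bar>)"
    unfolding weighted_average_def
    by (intro mult_mono measure_factor log_factor integral_factor mult_nonneg_nonneg set_integral_abs_nonneg)
      (use c_ge in \<open>auto simp: logw_pos less_imp_le\<close>)
  then show ?thesis
    by (simp add: Q_def P_def c_def weighted_average_def algebra_simps)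
qed

lemma stopping_cubes_average_le:
  obtains C where "0 < C" "\<And>t Q. Q \<in> stopping_cubes t \<Longrightarrow> weighted_average a \<alpha> f Q \<le> C * t"
proof
  define C where "C = 2 powr real CARD('n) * (1 + ln (2 powr real CARD('n))) powr (max \<alpha> 0)"
  have "0 < 1 + real CARD('n) * ln 2"
    by (simp add: add_pos_nonneg)
  then show "0 < C"
    unfolding C_def by simp
  fix t Q
  assume Q: "Q \<in> stopping_cubes t"
  then obtain k m where Q_eq: "Q = dyadic_cube k m"
    by (blast elim: dyadic_cubesE dest: stopping_cubes_dyadic)
  have "measure lebesgue Q < measure lebesgue (dyadic_ancestor 1 k m)"
    using powr_mono[of 1 "real CARD('n)" 2] measure_dyadic_cubes_pos[of Q]
    by (simp add: Q_eq measure_dyadic_ancestor)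
  then have "Q \<subset> dyadic_ancestor 1 k m"
    using dyadic_cube_subset_ancestor[of k m 1] Q_eq by auto
  then have "weighted_average a \<alpha> f (dyadic_ancestor 1 k m) \<le> t"
    using Q by (auto simp: stopping_cubes_def)
  then show "weighted_average a \<alpha> f Q \<le> C * t"
    using weighted_average_le_parent[of k m] \<open>0 < C\<close> unfolding Q_eq C_def[symmetric]
    by (meson mult_left_mono less_imp_le order_trans)
qed

end

end

lemma measure_stopping_cube_times_level_le:
  assumes "R \<in> stopping_cubes a \<alpha> f t"
  shows "measure lebesgue R * t \<le> measure lebesgue R powr a * logw \<alpha> R * (LINT y:R|lebesgue. \<bar>f y\<bar>)"
proof -
  have R: "R \<in> dyadic_cubes"
    using assms by (rule stopping_cubes_dyadic)
  have "measure lebesgue R * t \<le> measure lebesgue R * weighted_average a \<alpha> f R"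
    using stopping_cubes_average_gt[OF assms] measure_dyadic_cubes_pos[OF R] by simp
  then show ?thesis
    unfolding measure_times_weighted_average[OF R] .
qed

text \<open>Each stopping cube \<open>R \<subseteq> Q\<close> of level \<open>t'\<close> has \<open>|R| t' \<le> |R|\<^sup>a w(R) \<integral>\<^sub>R |f|\<close>, and by
  quasi-monotonicity \<open>|R|\<^sup>a w(R) \<le> C |Q|\<^sup>a w(Q)\<close>; summing over these disjoint cubes bounds
  their total measure by \<open>C |Q|\<^sup>a w(Q) \<integral>\<^sub>Q |f| / t'\<close>.\<close>

lemma emeasure_stopping_cubes_inside_le:
  fixes f :: "real^'n::finite \<Rightarrow> real"
  assumes loc_int: "loc_integrable f" and Q: "Q \<in> dyadic_cubes" and "0 < t'" "0 \<le> C"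
    and quasi_mono: "\<And>R. R \<in> dyadic_cubes \<Longrightarrow> R \<subseteq> Q \<Longrightarrow>
      measure lebesgue R powr a * logw \<alpha> R \<le> C * (measure lebesgue Q powr a * logw \<alpha> Q)"
  shows "emeasure lebesgue (\<Union>{R \<in> stopping_cubes a \<alpha> f t'. R \<subseteq> Q}) \<le>
    ennreal (C / t' * (measure lebesgue Q * weighted_average a \<alpha> f Q))"
proof -
  define RR where "RR = {R \<in> stopping_cubes a \<alpha> f t'. R \<subseteq> Q}"
  define K where "K = C * (measure lebesgue Q powr a * logw \<alpha> Q) / t'"
  have K_nonneg: "0 \<le> K"
    using assms(3,4) by (simp add: K_def logw_pos less_imp_le)
  have RR_cubes: "RR \<subseteq> dyadic_cubes"
    by (auto simp: RR_def dest: stopping_cubes_dyadic)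
  have "emeasure lebesgue (\<Union>RR) \<le> (\<integral>\<^sup>+x\<in>\<Union>RR. ennreal (K * \<bar>f x\<bar>) \<partial>lebesgue)"
  proof (rule emeasure_Union_le_nn_set_integral)
    show "countable RR"
      by (rule countable_subset[OF _ countable_stopping_cubes]) (auto simp: RR_def)
    show "disjoint RR"
      using stopping_cubes_disjoint unfolding RR_def disjoint_def by blast
    show "RR \<subseteq> sets lebesgue"
      using RR_cubes sets_dyadic_cubes by blast
    show "(\<lambda>x. ennreal (K * \<bar>f x\<bar>)) \<in> borel_measurable lebesgue"
      using borel_measurable_loc_integrable[OF loc_int] by measurable
    fix R
    assume "R \<in> RR"
    then have R: "R \<in> stopping_cubes a \<alpha> f t'" "R \<subseteq> Q" "R \<in> dyadic_cubes"
      using RR_cubes by (auto simp: RR_def)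
    have "measure lebesgue R * t' \<le> C * (measure lebesgue Q powr a * logw \<alpha> Q) * (LINT y:R|lebesgue. \<bar>f y\<bar>)"
      using measure_stopping_cube_times_level_le[OF R(1)]
        mult_right_mono[OF quasi_mono[OF R(3,2)] set_integral_abs_nonneg[where Q = R and M = lebesgue and f = f]]
      by linarith
    then have "measure lebesgue R \<le> K * (LINT y:R|lebesgue. \<bar>f y\<bar>)"
      using assms(3) by (simp add: K_def field_simps)
    then show "emeasure lebesgue R \<le> (\<integral>\<^sup>+x\<in>R. ennreal (K * \<bar>f x\<bar>) \<partial>lebesgue)"
      unfolding emeasure_dyadic_cubes[OF R(3)] nn_set_integral_scaled_abs[OF loc_int K_nonneg R(3)]
      by (rule ennreal_leI)
  qed
  also have "\<dots> \<le> (\<integral>\<^sup>+x\<in>Q. ennreal (K * \<bar>f x\<bar>) \<partial>lebesgue)"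
    by (rule nn_set_integral_set_mono) (auto simp: RR_def)
  also have "\<dots> = ennreal (C / t' * (measure lebesgue Q * weighted_average a \<alpha> f Q))"
    unfolding nn_set_integral_scaled_abs[OF loc_int K_nonneg Q] measure_times_weighted_average[OF Q]
    by (simp add: K_def mult.assoc)
  finally show ?thesis
    unfolding RR_def .
qed

lemma measure_inter_stopping_cubes_le:
  fixes f :: "real^'n::finite \<Rightarrow> real"
  assumes loc_int: "loc_integrable f" and a_nonneg: "0 \<le> a" and a_zero: "a = 0 \<longrightarrow> \<alpha> \<le> 0"
  obtains C where "\<And>t t' Q. 0 < t \<Longrightarrow> t < t' \<Longrightarrow> Q \<in> stopping_cubes a \<alpha> f t \<Longrightarrow>
    measure lebesgue (Q \<inter> \<Union>(stopping_cubes a \<alpha> f t')) \<le> C * (t / t') * measure lebesgue Q"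
proof -
  obtain Cq where Cq: "0 < Cq" "\<And>R Q. R \<in> dyadic_cubes \<Longrightarrow> Q \<in> (dyadic_cubes :: (real^'n) set set) \<Longrightarrow>
      R \<subseteq> Q \<Longrightarrow> measure lebesgue R powr a * logw \<alpha> R \<le> Cq * (measure lebesgue Q powr a * logw \<alpha> Q)"
    using weighted_measure_quasi_mono[OF a_nonneg a_zero] by blast
  obtain Cp where Cp: "0 < Cp" "\<And>t Q. Q \<in> stopping_cubes a \<alpha> f t \<Longrightarrow> weighted_average a \<alpha> f Q \<le> Cp * t"
    using stopping_cubes_average_le[OF loc_int a_nonneg] by blast
  have "measure lebesgue (Q \<inter> \<Union>(stopping_cubes a \<alpha> f t')) \<le> Cq * Cp * (t / t') * measure lebesgue Q"
    if t: "0 < t" "t < t'" and Q: "Q \<in> stopping_cubes a \<alpha> f t" for t t' Q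
  proof -
    have Q_cube: "Q \<in> dyadic_cubes"
      using Q by (rule stopping_cubes_dyadic)
    have "Q \<inter> \<Union>(stopping_cubes a \<alpha> f t') \<subseteq> \<Union>{R \<in> stopping_cubes a \<alpha> f t'. R \<subseteq> Q}"
      using stopping_cube_subset[OF Q] t by fastforce
    moreover have "\<Union>{R \<in> stopping_cubes a \<alpha> f t'. R \<subseteq> Q} \<in> sets lebesgue"
    proof (rule sets.countable_Union)
      show "countable {R \<in> stopping_cubes a \<alpha> f t'. R \<subseteq> Q}"
        by (rule countable_subset[OF _ countable_stopping_cubes]) auto
      show "{R \<in> stopping_cubes a \<alpha> f t'. R \<subseteq> Q} \<subseteq> sets lebesgue"
        by (auto intro: sets_dyadic_cubes stopping_cubes_dyadic)
    qed
    ultimately have "emeasure lebesgue (Q \<inter> \<Union>(stopping_cubes a \<alpha> f t')) \<le>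
        emeasure lebesgue (\<Union>{R \<in> stopping_cubes a \<alpha> f t'. R \<subseteq> Q})"
      by (rule emeasure_mono)
    also have "\<dots> \<le> ennreal (Cq / t' * (measure lebesgue Q * weighted_average a \<alpha> f Q))"
      using t Cq(1) Cq(2)[OF _ Q_cube] by (intro emeasure_stopping_cubes_inside_le loc_int Q_cube) auto
    also have "\<dots> \<le> ennreal (Cq * Cp * (t / t') * measure lebesgue Q)"
      using Cq(1) t mult_left_mono[OF Cp(2)[OF Q] measure_nonneg]
      by (intro ennreal_leI) (simp add: field_simps)
    finally have "emeasure lebesgue (Q \<inter> \<Union>(stopping_cubes a \<alpha> f t')) \<le>
        ennreal (Cq * Cp * (t / t') * measure lebesgue Q)" .
    moreover have "Q \<inter> \<Union>(stopping_cubes a \<alpha> f t') \<in> fmeasurable lebesgue"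
      using sets_dyadic_cubes[OF Q_cube] sets_Union_stopping_cubes
      by (intro fmeasurableI2[OF fmeasurable_dyadic_cubes[OF Q_cube]] sets.Int) auto
    ultimately show ?thesis
      using Cq(1) Cp(1) t measure_dyadic_cubes_pos[OF Q_cube]
      by (simp add: emeasure_eq_measure2)
  qed
  then show ?thesis
    by (rule that)
qed

context
  fixes a \<alpha> q :: real and f :: "real^'n::finite \<Rightarrow> real" and B :: ennreal
  assumes q_pos: "0 < q" and B_finite: "B < \<infinity>"
    and sparse_bound: "\<And>I Q. sparse I Q \<Longrightarrow> sparse_sum a \<alpha> f q I Q \<le> B"
begin

lemma finite_ancestors_above:
  assumes "0 < t"
  shows "finite {j. t < weighted_average a \<alpha> f (dyadic_ancestor j k m)}"
proof (rule finite_if_suminf_less_infinity)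
  let ?u = "\<lambda>j. ennreal (measure lebesgue (dyadic_ancestor j k m) *
    weighted_average a \<alpha> f (dyadic_ancestor j k m) powr q)"
  have "(\<Sum>j. ?u j) = sparse_sum a \<alpha> f q UNIV (\<lambda>j. dyadic_ancestor j k m)"
    by (simp add: sparse_sum_def)
  also have "\<dots> < \<infinity>"
    using sparse_bound[OF sparse_dyadic_ancestors] B_finite by (rule order.strict_trans1)
  finally show "(\<Sum>j. ?u j) < \<infinity>" .
  show "0 < measure lebesgue (dyadic_cube k m) * t powr q"
    using assms by (simp add: measure_dyadic_cubes_pos)
  fix j
  assume "j \<in> {j. t < weighted_average a \<alpha> f (dyadic_ancestor j k m)}"
  then have "t powr q \<le> weighted_average a \<alpha> f (dyadic_ancestor j k m) powr q"
    using assms q_pos by (intro powr_mono2) auto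
  moreover have "measure lebesgue (dyadic_cube k m) \<le> measure lebesgue (dyadic_ancestor j k m)"
    by (intro measure_mono_fmeasurable dyadic_cube_subset_ancestor) (auto simp: fmeasurable_dyadic_cubes)
  ultimately show "ennreal (measure lebesgue (dyadic_cube k m) * t powr q) \<le> ?u j"
    using assms by (intro ennreal_leI mult_mono) auto
qed

lemma exists_stopping_cube:
  assumes "P \<in> dyadic_cubes" "0 < t" "t < weighted_average a \<alpha> f P"
  obtains Q where "Q \<in> stopping_cubes a \<alpha> f t" "P \<subseteq> Q"
proof -
  obtain k m where P: "P = dyadic_cube k m"
    using assms(1) by (rule dyadic_cubesE)
  define J where "J = {j. t < weighted_average a \<alpha> f (dyadic_ancestor j k m)}"
  have "finite J" "0 \<in> J"
    using finite_ancestors_above[OF assms(2)] assms(3) by (simp_all add: J_def P)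
  define j0 where "j0 = Max J"
  have j0: "j0 \<in> J" "\<And>j. j \<in> J \<Longrightarrow> j \<le> j0"
    unfolding j0_def using \<open>finite J\<close> \<open>0 \<in> J\<close> by (auto intro: Max_in)
  have "weighted_average a \<alpha> f Q' \<le> t"
    if Q'_cube: "Q' \<in> dyadic_cubes" and Q'_sup: "dyadic_ancestor j0 k m \<subset> Q'" for Q'
  proof -
    obtain i where "Q' = dyadic_ancestor i (k - int j0) (\<lambda>x. m x div 2 ^ j0)"
      using dyadic_superset_eq_ancestor[OF Q'_cube, of "k - int j0" "\<lambda>x. m x div 2 ^ j0"] Q'_sup
      unfolding dyadic_ancestor_def[of j0] by auto
    then have Q': "Q' = dyadic_ancestor (j0 + i) k m"
      by (simp add: dyadic_ancestor_add)
    then have "i \<noteq> 0"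
      using Q'_sup by auto
    then have "j0 + i \<notin> J"
      using j0(2) by fastforce
    then show ?thesis
      by (simp add: Q' J_def)
  qed
  then have "dyadic_ancestor j0 k m \<in> stopping_cubes a \<alpha> f t"
    using j0(1) by (simp add: stopping_cubes_def J_def)
  moreover have "P \<subseteq> dyadic_ancestor j0 k m"
    unfolding P by (rule dyadic_cube_subset_ancestor)
  ultimately show ?thesis
    by (rule that)
qed

lemma max_op_gt_imp_mem_stopping_cubes:
  assumes "0 < t" "ennreal t < max_op (real CARD('n) * a) \<alpha> f x"
  shows "x \<in> \<Union>(stopping_cubes a \<alpha> f t)"
proof -
  obtain P where P: "P \<in> dyadic_cubes" "x \<in> P" "ennreal t < ennreal (weighted_average a \<alpha> f P)"
    using assms(2) unfolding max_op_eq_SUP_weighted_average by (auto simp: less_SUP_iff)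
  then have "t < weighted_average a \<alpha> f P"
    using assms(1) by (simp add: ennreal_less_iff)
  then obtain Q where "Q \<in> stopping_cubes a \<alpha> f t" "P \<subseteq> Q"
    using exists_stopping_cube[OF P(1) assms(1)] by blast
  then show ?thesis
    using P(2) by blast
qed

lemma Union_stopping_cubes_antimono:
  assumes "0 < t" "t \<le> t'"
  shows "\<Union>(stopping_cubes a \<alpha> f t') \<subseteq> \<Union>(stopping_cubes a \<alpha> f t)"
proof
  fix x
  assume "x \<in> \<Union>(stopping_cubes a \<alpha> f t')"
  then obtain R where R: "R \<in> stopping_cubes a \<alpha> f t'" "x \<in> R"
    by blast
  then have "t < weighted_average a \<alpha> f R"
    using assms(2) stopping_cubes_average_gt by fastforce
  then obtain Q where "Q \<in> stopping_cubes a \<alpha> f t" "R \<subseteq> Q"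
    using exists_stopping_cube[OF stopping_cubes_dyadic[OF R(1)] assms(1)] by blast
  then show "x \<in> \<Union>(stopping_cubes a \<alpha> f t)"
    using R(2) by blast
qed

lemma countable_sparse_integral_le:
  assumes "countable S" "\<forall>s\<in>S. C s \<in> dyadic_cubes" "disjoint_family_on E S"
    and "\<forall>s\<in>S. E s \<in> sets lebesgue \<and> E s \<subseteq> C s \<and> measure lebesgue (C s) / 2 \<le> measure lebesgue (E s)"
  shows "(\<integral>\<^sup>+s. ennreal (measure lebesgue (C s) * weighted_average a \<alpha> f (C s) powr q) \<partial>count_space S) \<le> B"
proof -
  have "(\<integral>\<^sup>+s. ennreal (measure lebesgue (C s) * weighted_average a \<alpha> f (C s) powr q) \<partial>count_space S) =
      sparse_sum a \<alpha> f q (to_nat_on S ` S) (C \<circ> from_nat_into S)"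
    unfolding suminf_to_nat_on[OF assms(1), symmetric] sparse_sum_def comp_def ..
  also have "\<dots> \<le> B"
    using sparse_to_nat_on[OF assms] by (rule sparse_bound)
  finally show ?thesis .
qed

lemma nn_integral_stopping_pairs_ge:
  fixes c :: "int \<Rightarrow> ennreal"
  assumes "ennreal (2 powr real_of_int k) < max_op (real CARD('n) * a) \<alpha> f x"
  shows "c k \<le> (\<integral>\<^sup>+z. c (fst z) * indicator (snd z) x \<partial>count_space (stopping_pairs a \<alpha> f))"
proof -
  obtain Q where Q: "Q \<in> stopping_cubes a \<alpha> f (2 powr real_of_int k)" "x \<in> Q"
    using max_op_gt_imp_mem_stopping_cubes[OF _ assms] by auto
  then have "(k, Q) \<in> stopping_pairs a \<alpha> f"
    by (simp add: stopping_pairs_def)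
  from nn_integral_ge_point[OF this, where p = "\<lambda>z. c (fst z) * indicator (snd z) x"]
  show ?thesis
    using Q(2) by simp
qed

text \<open>The layer-cake bound \<open>(M f)\<^sup>q \<le> 2\<^sup>q 2\<^sup>k\<^sup>q\<close> for the \<open>k\<close> with \<open>2\<^sup>k < M f \<le> 2\<^sup>k\<^sup>+\<^sup>1\<close>, where
  \<open>{M f > 2\<^sup>k}\<close> is covered by the stopping cubes of level \<open>2\<^sup>k\<close>.\<close>

lemma enn_powr_max_op_le:
  "enn_powr (max_op (real CARD('n) * a) \<alpha> f x) q \<le>
    (\<integral>\<^sup>+z. ennreal (2 powr q * 2 powr (real_of_int (fst z) * q)) * indicator (snd z) x
      \<partial>count_space (stopping_pairs a \<alpha> f))"
    (is "enn_powr ?M q \<le> ?g")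
proof -
  have bound: "ennreal (y powr q) \<le> ?g" if y_pos: "0 < y" and y_le: "ennreal y \<le> ?M" for y
  proof -
    obtain k :: int where k: "2 powr real_of_int k < y" "y \<le> 2 * 2 powr real_of_int k"
      using exists_two_powr_between[OF y_pos] .
    have "y powr q \<le> (2 * 2 powr real_of_int k) powr q"
      using k(2) y_pos q_pos by (intro powr_mono2) auto
    also have "\<dots> = 2 powr q * 2 powr (real_of_int k * q)"
      by (simp add: powr_mult powr_powr)
    finally have "ennreal (y powr q) \<le> ennreal (2 powr q * 2 powr (real_of_int k * q))"
      by (rule ennreal_leI)
    also have "\<dots> \<le> ?g"
      using nn_integral_stopping_pairs_ge[OF order.strict_trans2[OF ennreal_lessI[OF y_pos k(1)] y_le],
          of "\<lambda>k. ennreal (2 powr q * 2 powr (real_of_int k * q))"] by simp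
    finally show ?thesis .
  qed
  show ?thesis
  proof (cases ?M)
    case (real y)
    then show ?thesis
      using bound[of y] q_pos by (cases "y = 0") (auto simp: enn_powr_def)
  next
    case top
    have "?g = \<infinity>"
    proof (rule ennreal_eq_infinity_if_unbounded)
      show "ennreal s \<le> ?g" if "0 < s" for s
        using bound[of "s powr (1 / q)"] that q_pos top by (simp add: powr_powr)
    qed
    then show ?thesis
      by simp
  qed
qed

lemma trimmed_stopping_pairs_disjoint:
  "disjoint_family_on (\<lambda>z. snd z - \<Union>(stopping_cubes a \<alpha> f (2 powr real_of_int (fst z + int M))))
     {z \<in> stopping_pairs a \<alpha> f. fst z mod int M = r}"
    (is "disjoint_family_on ?E ?F")
proof -
  let ?\<Omega> = "\<lambda>k::int. \<Union>(stopping_cubes a \<alpha> f (2 powr real_of_int k))"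
  have level: "snd z \<in> stopping_cubes a \<alpha> f (2 powr real_of_int (fst z))" if "z \<in> ?F" for z
    using that by (auto simp: stopping_pairs_def)
  have less: "?E z \<inter> ?E z' = {}" if "z \<in> ?F" "z' \<in> ?F" "fst z < fst z'" for z z'
  proof -
    have "int M dvd fst z' - fst z"
      using that(1,2) by (auto simp: mod_eq_dvd_iff)
    then have "fst z + int M \<le> fst z'"
      using that(3) zdvd_imp_le by fastforce
    then have "?\<Omega> (fst z') \<subseteq> ?\<Omega> (fst z + int M)"
      by (intro Union_stopping_cubes_antimono) auto
    moreover have "snd z' \<subseteq> ?\<Omega> (fst z')"
      using level[OF that(2)] by blast
    ultimately show ?thesis
      by blast
  qed
  show ?thesis
    unfolding disjoint_family_on_def
  proof (intro ballI impI)
    fix z z'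
    assume z: "z \<in> ?F" "z' \<in> ?F" "z \<noteq> z'"
    consider "fst z < fst z'" | "fst z' < fst z" | "fst z = fst z'" "snd z \<noteq> snd z'"
      using z(3) by (cases z, cases z') fastforce
    then show "?E z \<inter> ?E z' = {}"
    proof cases
      case 3
      then have "snd z \<inter> snd z' = {}"
        using disjointD[OF stopping_cubes_disjoint level[OF z(1)]] level[OF z(2)] by simp
      then show ?thesis
        by blast
    qed (use less z in blast)+
  qed
qed

text \<open>Within one residue class of levels modulo \<open>M\<close>, the stopping cubes with the stopping cubes
  \<open>M\<close> levels higher removed are pairwise disjoint; if that removes at most half of each cube, the
  class is a sparse family.\<close>

lemma residue_class_integral_le:
  assumes half: "\<And>z. z \<in> stopping_pairs a \<alpha> f \<Longrightarrow>
    measure lebesgue (snd z \<inter> \<Union>(stopping_cubes a \<alpha> f (2 powr real_of_int (fst z + int M))))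
      \<le> measure lebesgue (snd z) / 2"
  shows "(\<integral>\<^sup>+z. ennreal (measure lebesgue (snd z) * weighted_average a \<alpha> f (snd z) powr q)
    \<partial>count_space {z \<in> stopping_pairs a \<alpha> f. fst z mod int M = r}) \<le> B"
proof (rule countable_sparse_integral_le[OF _ _ trimmed_stopping_pairs_disjoint])
  show "countable {z \<in> stopping_pairs a \<alpha> f. fst z mod int M = r}"
    by (rule countable_subset[OF _ countable_stopping_pairs]) auto
  have cube: "snd z \<in> dyadic_cubes" if "z \<in> stopping_pairs a \<alpha> f" for z
    using that stopping_cubes_dyadic by (auto simp: stopping_pairs_def)
  then show "\<forall>z\<in>{z \<in> stopping_pairs a \<alpha> f. fst z mod int M = r}. snd z \<in> dyadic_cubes"
    by blast
  show "\<forall>z\<in>{z \<in> stopping_pairs a \<alpha> f. fst z mod int M = r}.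
      snd z - \<Union>(stopping_cubes a \<alpha> f (2 powr real_of_int (fst z + int M))) \<in> sets lebesgue \<and>
      snd z - \<Union>(stopping_cubes a \<alpha> f (2 powr real_of_int (fst z + int M))) \<subseteq> snd z \<and>
      measure lebesgue (snd z) / 2 \<le>
        measure lebesgue (snd z - \<Union>(stopping_cubes a \<alpha> f (2 powr real_of_int (fst z + int M))))"
  proof
    fix z
    assume z: "z \<in> {z \<in> stopping_pairs a \<alpha> f. fst z mod int M = r}"
    then have Q: "snd z \<in> dyadic_cubes"
      using cube by blast
    have "snd z - \<Union>(stopping_cubes a \<alpha> f (2 powr real_of_int (fst z + int M))) \<in> sets lebesgue"
      by (intro sets.Diff sets_dyadic_cubes[OF Q] sets_Union_stopping_cubes)
    moreover have "measure lebesgue (snd z) / 2 \<le>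
        measure lebesgue (snd z - \<Union>(stopping_cubes a \<alpha> f (2 powr real_of_int (fst z + int M))))"
      using half z by (intro measure_Diff_ge_half fmeasurable_dyadic_cubes[OF Q] sets_Union_stopping_cubes) auto
    ultimately show "snd z - \<Union>(stopping_cubes a \<alpha> f (2 powr real_of_int (fst z + int M))) \<in> sets lebesgue \<and>
        snd z - \<Union>(stopping_cubes a \<alpha> f (2 powr real_of_int (fst z + int M))) \<subseteq> snd z \<and>
        measure lebesgue (snd z) / 2 \<le>
          measure lebesgue (snd z - \<Union>(stopping_cubes a \<alpha> f (2 powr real_of_int (fst z + int M))))"
      by blast
  qed
qed

context
  assumes loc_int: "loc_integrable f" and a_nonneg: "0 \<le> a" and a_zero: "a = 0 \<longrightarrow> \<alpha> \<le> 0"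
begin

lemma integral_stopping_pairs_le:
  obtains N :: nat where "(\<integral>\<^sup>+z. ennreal (measure lebesgue (snd z) *
      weighted_average a \<alpha> f (snd z) powr q) \<partial>count_space (stopping_pairs a \<alpha> f)) \<le> of_nat N * B"
proof -
  let ?g = "\<lambda>z. ennreal (measure lebesgue (snd z) * weighted_average a \<alpha> f (snd z) powr q)"
  obtain C where C: "\<And>t t' Q. 0 < t \<Longrightarrow> t < t' \<Longrightarrow> Q \<in> stopping_cubes a \<alpha> f t \<Longrightarrow>
      measure lebesgue (Q \<inter> \<Union>(stopping_cubes a \<alpha> f t')) \<le> C * (t / t') * measure lebesgue Q"
    using measure_inter_stopping_cubes_le[OF loc_int a_nonneg a_zero] by blast
  obtain M :: nat where M: "0 < M" "C / 2 ^ M \<le> 1 / 2"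
    by (rule exists_power_two_halving)
  define F where "F r = {z \<in> stopping_pairs a \<alpha> f. fst z mod int M = r}" for r
  have "measure lebesgue (snd z \<inter> \<Union>(stopping_cubes a \<alpha> f (2 powr real_of_int (fst z + int M))))
      \<le> measure lebesgue (snd z) / 2" if "z \<in> stopping_pairs a \<alpha> f" for z
  proof -
    have "measure lebesgue (snd z \<inter> \<Union>(stopping_cubes a \<alpha> f (2 powr real_of_int (fst z + int M))))
        \<le> C * (2 powr real_of_int (fst z) / 2 powr real_of_int (fst z + int M)) * measure lebesgue (snd z)"
      using that M(1) by (intro C) (auto simp: stopping_pairs_def)
    also have "\<dots> = C / 2 ^ M * measure lebesgue (snd z)"
      by (simp add: powr_add powr_realpow)
    also have "\<dots> \<le> 1 / 2 * measure lebesgue (snd z)"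
      using M(2) by (intro mult_right_mono) auto
    finally show ?thesis
      by simp
  qed
  then have class_le: "(\<integral>\<^sup>+z. ?g z \<partial>count_space (F r)) \<le> B" for r
    unfolding F_def by (rule residue_class_integral_le)
  have "stopping_pairs a \<alpha> f = (\<Union>r\<in>{0..<int M}. F r)"
    using M(1) by (auto simp: F_def)
  moreover have "disjoint_family_on F {0..<int M}"
    by (auto simp: disjoint_family_on_def F_def)
  ultimately have "(\<integral>\<^sup>+z. ?g z \<partial>count_space (stopping_pairs a \<alpha> f)) =
      (\<Sum>r\<in>{0..<int M}. \<integral>\<^sup>+z. ?g z \<partial>count_space (F r))"
    by (simp add: nn_integral_count_space_UN_disjoint)
  also have "\<dots> \<le> (\<Sum>r\<in>{0..<int M}. B)"
    by (intro sum_mono class_le)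
  also have "\<dots> = of_nat M * B"
    by simp
  finally show ?thesis
    by (rule that)
qed

lemma max_op_integral_finite:
  "(\<integral>\<^sup>+x. enn_powr (max_op (real CARD('n) * a) \<alpha> f x) q \<partial>lebesgue) < \<infinity>"
proof -
  let ?S = "stopping_pairs a \<alpha> f"
  let ?c = "\<lambda>z. ennreal (2 powr q * 2 powr (real_of_int (fst z) * q))"
  obtain N :: nat where N: "(\<integral>\<^sup>+z. ennreal (measure lebesgue (snd z) *
      weighted_average a \<alpha> f (snd z) powr q) \<partial>count_space ?S) \<le> of_nat N * B"
    by (rule integral_stopping_pairs_le)
  have "(\<integral>\<^sup>+x. enn_powr (max_op (real CARD('n) * a) \<alpha> f x) q \<partial>lebesgue) \<le>
      (\<integral>\<^sup>+x. \<integral>\<^sup>+z. ?c z * indicator (snd z) x \<partial>count_space ?S \<partial>lebesgue)"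
    by (intro nn_integral_mono enn_powr_max_op_le)
  also have "\<dots> = (\<integral>\<^sup>+z. ?c z * emeasure lebesgue (snd z) \<partial>count_space ?S)"
    by (rule nn_integral_stopping_pairs_indicator)
  also have "\<dots> \<le> (\<integral>\<^sup>+z. ennreal (2 powr q) * ennreal (measure lebesgue (snd z) *
      weighted_average a \<alpha> f (snd z) powr q) \<partial>count_space ?S)"
    using stopping_pair_term_le[OF q_pos] by (intro nn_integral_mono) auto
  also have "\<dots> \<le> ennreal (2 powr q) * (of_nat N * B)"
    using N by (simp add: nn_integral_cmult mult_left_mono)
  also have "\<dots> < \<infinity>"
    using B_finite by (simp add: ennreal_mult_less_top of_nat_less_top)
  finally show ?thesis .
qed

end

end

lemma max_op_integral_finite_iff_sparse_sum_bounded: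
  fixes f :: "real^'n::finite \<Rightarrow> real"
  assumes "loc_integrable f" "0 < q" "0 \<le> a" "a = 0 \<longrightarrow> \<alpha> \<le> 0"
  shows "(\<integral>\<^sup>+x. enn_powr (max_op (real CARD('n) * a) \<alpha> f x) q \<partial>lebesgue) < \<infinity> \<longleftrightarrow>
    (\<exists>B<\<infinity>. \<forall>I Q. sparse I Q \<longrightarrow> sparse_sum a \<alpha> f q I Q \<le> B)"
    (is "?integral < \<infinity> \<longleftrightarrow> _")
proof
  assume "?integral < \<infinity>"
  then show "\<exists>B<\<infinity>. \<forall>I Q. sparse I Q \<longrightarrow> sparse_sum a \<alpha> f q I Q \<le> B"
    using sparse_sum_le_max_op_integral[OF less_imp_le[OF assms(2)]]
    by (intro exI[of _ "2 * ?integral"]) (auto simp: ennreal_mult_less_top)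
next
  assume "\<exists>B<\<infinity>. \<forall>I Q. sparse I Q \<longrightarrow> sparse_sum a \<alpha> f q I Q \<le> B"
  then obtain B where "B < \<infinity>" "\<And>I Q. sparse I Q \<Longrightarrow> sparse_sum a \<alpha> f q I Q \<le> B"
    by blast
  then show "?integral < \<infinity>"
    by (rule max_op_integral_finite[OF assms(2) _ _ assms(1,3,4)])
qed

theorem theorem3p6:
  fixes p q \<alpha> :: real
  assumes "1 \<le> p" "p \<le> q" "p = q \<longrightarrow> \<alpha> \<le> 0"
  shows "(SR_log p q \<alpha> :: (real^'n::finite \<Rightarrow> real) set)
           = max_Lq (real CARD('n) * (1/p - 1/q)) \<alpha> q"
proof (intro set_eqI)
  fix f :: "real^'n \<Rightarrow> real"
  have q: "0 < q" and a: "0 \<le> 1/p - 1/q" "1/p - 1/q = 0 \<longrightarrow> \<alpha> \<le> 0"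
    using assms by (auto simp: frac_le)
  have "f \<in> SR_log p q \<alpha> \<longleftrightarrow>
      loc_integrable f \<and> (\<exists>B<\<infinity>. \<forall>I Q. sparse I Q \<longrightarrow> sparse_sum (1/p - 1/q) \<alpha> f q I Q \<le> B)"
    using q by (intro SR_log_iff_sparse_sum_bounded) simp
  also have "\<dots> \<longleftrightarrow> loc_integrable f \<and>
      (\<integral>\<^sup>+x. enn_powr (max_op (real CARD('n) * (1/p - 1/q)) \<alpha> f x) q \<partial>lebesgue) < \<infinity>"
    using max_op_integral_finite_iff_sparse_sum_bounded[OF _ q a] by blast
  also have "\<dots> \<longleftrightarrow> f \<in> max_Lq (real CARD('n) * (1/p - 1/q)) \<alpha> q"
    by (simp add: max_Lq_def)
  finally show "f \<in> SR_log p q \<alpha> \<longleftrightarrow> f \<in> max_Lq (real CARD('n) * (1/p - 1/q)) \<alpha> q" .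
qed

end
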